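(* Let $\vec\Phi:\Sigma^2\to\mathbb R^n$ ($n\ge3$) be a smooth conformal Willmore immersion of a Riemann surface, and let $\vec\omega=g^{-1}\otimes(\bar\partial^N-\bar\partial^\top)\vec h_0-|\vec h_0|^2_{WP}\,\partial\vec\Phi$. Then the four real-valued (vector-, $2$-vector-, scalar- and vector-valued respectively) $1$-forms $$\mathrm{Im}\,\vec\omega,\qquad \mathrm{Im}\big(\vec\Phi\wedge\vec\omega+g^{-1}\otimes\vec h_0\wedge\bar\partial\vec\Phi\big),\qquad \mathrm{Im}\,\langle\vec\Phi,\vec\omega\rangle,$$ $$\mathrm{Im}\Big(\mathscr I_{\vec\Phi}(\vec\omega)-g^{-1}\otimes\big(\bar\partial|\vec\Phi|^2\otimes\vec h_0-2\langle\vec\Phi,\vec h_0\rangle\otimes\bar\partial\vec\Phi\big)\Big)$$ are closed on $\Sigma^2$, where $\mathscr I_{\vec\Phi}(\vec X)=|\vec\Phi|^2\vec X-2\langle\vec\Phi,\vec X\rangle\vec\Phi$. (They correspond respectively to the invariance of $\int|\vec H|^2-K_g$ under translations, rotations, dilations and compositions of translations with inversions.)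
   Context: Notation. $\Sigma^2$ is a Riemann surface; $\vec\Phi:\Sigma^2\to\mathbb R^n$ ($n\ge3$) is a conformal immersion. In a local complex coordinate $z=x_1+ix_2$, $\partial_z=\frac12(\partial_{x_1}-i\partial_{x_2})$, $\partial_{\bar z}=\frac12(\partial_{x_1}+i\partial_{x_2})$, $g=\vec\Phi^*g_{\mathbb R^n}=e^{2\lambda}|dz|^2$ with $e^{2\lambda}=2\langle\partial_z\vec\Phi,\partial_{\bar z}\vec\Phi\rangle$, where $\langle\cdot,\cdot\rangle$ is the complex-bilinear extension of the Euclidean scalar product. The complexified pull-back bundle splits into tangent and normal parts and the pulled-back flat connection splits as $\nabla=\nabla^\top+\nabla^N$; $\partial=\nabla_{\partial_z}(\cdot)\otimes dz$, $\bar\partial=\nabla_{\partial_{\bar z}}(\cdot)\otimes d\bar z$, and $\partial^N,\partial^\top,\bar\partial^N,\bar\partial^\top$ are their normal and tangential parts. $\vec{\mathbb I}$ is the second fundamental form, $\vec H=\frac12\mathrm{tr}_g\vec{\mathbb I}$, $K_g$ the Gauss curvature. The Weingarten tensor is $\vec h_0=2\vec{\mathbb I}(\partial_z\vec\Phi,\partial_z\vec\Phi)\,dz^2=e^{2\lambda}\vec H_0\,dz^2$, and $|\vec h_0|^2_{WP}=|\vec H_0|^2=|\vec H|^2-K_g$. For $\xi=f\,dz^p\otimes d\bar z^q$, $g^{-1}\otimes\xi=e^{-2\lambda}f\,dz^{p-1}\otimes d\bar z^{q-1}$; wedge products, scalar products and products with vectors of such forms are defined coefficientwise. A smooth immersion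 is Willmore if $\Delta_g^N\vec H-2|\vec H|^2\vec H+\mathscr A(\vec H)=0$, where $\mathscr A(\vec H)=\sum_{i,j}\langle\vec{\mathbb I}(\vec\epsilon_i,\vec\epsilon_j),\vec H\rangle\vec{\mathbb I}(\vec\epsilon_i,\vec\epsilon_j)$ for a local orthonormal tangent frame. *)

theory Defs
  imports "HOL-Analysis.Analysis"
begin

text \<open>Everything is written in a local conformal (holomorphic) chart: the Riemann surface
is replaced by an open set U of the complex plane, z = x1 + i x2.  Vectors of R^n are
real^'n, complexified vectors complex^'n, 2-vectors are antisymmetric n x n matrices.\<close>

definition pd1 :: "(complex \<Rightarrow> 'a::real_normed_vector) \<Rightarrow> complex \<Rightarrow> 'a" where
  "pd1 f z = frechet_derivative f (at z) 1"

definition pd2 :: "(complex \<Rightarrow> 'a::real_normed_vector) \<Rightarrow> complex \<Rightarrow> 'a" where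
  "pd2 f z = frechet_derivative f (at z) \<i>"

definition pdk :: "nat \<Rightarrow> (complex \<Rightarrow> 'a::real_normed_vector) \<Rightarrow> complex \<Rightarrow> 'a" where
  "pdk k f = (if k = 1 then pd1 f else pd2 f)"

fun Ck_on :: "nat \<Rightarrow> complex set \<Rightarrow> (complex \<Rightarrow> 'a::real_normed_vector) \<Rightarrow> bool" where
  "Ck_on 0 U f = continuous_on U f"
| "Ck_on (Suc k) U f = (f differentiable_on U \<and> Ck_on k U (pd1 f) \<and> Ck_on k U (pd2 f))"

definition smooth_on :: "complex set \<Rightarrow> (complex \<Rightarrow> 'a::real_normed_vector) \<Rightarrow> bool" where
  "smooth_on U f \<longleftrightarrow> (\<forall>k. Ck_on k U f)"

definition conformal_immersion_on :: "complex set \<Rightarrow> (complex \<Rightarrow> real^'n) \<Rightarrow> bool" where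
  "conformal_immersion_on U \<Phi> \<longleftrightarrow>
     (\<forall>z\<in>U. \<Phi> differentiable (at z) \<and> pd1 \<Phi> z \<noteq> 0 \<and>
        pd1 \<Phi> z \<bullet> pd2 \<Phi> z = 0 \<and> norm (pd1 \<Phi> z) = norm (pd2 \<Phi> z))"

text \<open>conformal factor e^{2 lambda} = 2 <d_z Phi, d_zbar Phi> = (|Phi_x1|^2+|Phi_x2|^2)/2\<close>
definition e2l :: "(complex \<Rightarrow> real^'n) \<Rightarrow> complex \<Rightarrow> real" where
  "e2l \<Phi> z = (pd1 \<Phi> z \<bullet> pd1 \<Phi> z + pd2 \<Phi> z \<bullet> pd2 \<Phi> z) / 2"

definition tproj :: "(complex \<Rightarrow> real^'n) \<Rightarrow> complex \<Rightarrow> real^'n \<Rightarrow> real^'n" where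
  "tproj \<Phi> z v = (1 / e2l \<Phi> z) *\<^sub>R ((v \<bullet> pd1 \<Phi> z) *\<^sub>R pd1 \<Phi> z + (v \<bullet> pd2 \<Phi> z) *\<^sub>R pd2 \<Phi> z)"

definition nproj :: "(complex \<Rightarrow> real^'n) \<Rightarrow> complex \<Rightarrow> real^'n \<Rightarrow> real^'n" where
  "nproj \<Phi> z v = v - tproj \<Phi> z v"

text \<open>second fundamental form in coordinates: II(d_i Phi, d_j Phi) = (d_i d_j Phi)^N\<close>
definition IIc :: "(complex \<Rightarrow> real^'n) \<Rightarrow> nat \<Rightarrow> nat \<Rightarrow> complex \<Rightarrow> real^'n" where
  "IIc \<Phi> i j z = nproj \<Phi> z (pdk i (pdk j \<Phi>) z)"

text \<open>mean curvature vector H = (1/2) tr_g II\<close>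
definition meanH :: "(complex \<Rightarrow> real^'n) \<Rightarrow> complex \<Rightarrow> real^'n" where
  "meanH \<Phi> z = (1 / (2 * e2l \<Phi> z)) *\<^sub>R (IIc \<Phi> 1 1 z + IIc \<Phi> 2 2 z)"

text \<open>Simons operator A(H) = sum_ij <II(e_i,e_j),H> II(e_i,e_j), e_i = e^{-lambda} d_i Phi\<close>
definition simonsA :: "(complex \<Rightarrow> real^'n) \<Rightarrow> complex \<Rightarrow> real^'n" where
  "simonsA \<Phi> z = (\<Sum>i\<in>{1::nat,2}. \<Sum>j\<in>{1::nat,2}.
      ((1 / (e2l \<Phi> z)\<^sup>2) * (IIc \<Phi> i j z \<bullet> meanH \<Phi> z)) *\<^sub>R IIc \<Phi> i j z)"

text \<open>normal Laplacian Delta_g^N V = e^{-2 lambda} sum_i nabla^N_i nabla^N_i V (conformal chart)\<close>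
definition lapN :: "(complex \<Rightarrow> real^'n) \<Rightarrow> (complex \<Rightarrow> real^'n) \<Rightarrow> complex \<Rightarrow> real^'n" where
  "lapN \<Phi> V z = (1 / e2l \<Phi> z) *\<^sub>R
     (\<Sum>i\<in>{1::nat,2}. nproj \<Phi> z (pdk i (\<lambda>w. nproj \<Phi> w (pdk i V w)) z))"

definition willmore_on :: "complex set \<Rightarrow> (complex \<Rightarrow> real^'n) \<Rightarrow> bool" where
  "willmore_on U \<Phi> \<longleftrightarrow> (\<forall>z\<in>U.
     lapN \<Phi> (meanH \<Phi>) z - (2 * (norm (meanH \<Phi> z))\<^sup>2) *\<^sub>R meanH \<Phi> z + simonsA \<Phi> z = 0)"

definition cvec :: "real^'n \<Rightarrow> complex^'n" where
  "cvec v = (\<chi> i. complex_of_real (v $ i))"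

definition vRe :: "complex^'n \<Rightarrow> real^'n" where
  "vRe v = (\<chi> i. Re (v $ i))"

definition vIm :: "complex^'n \<Rightarrow> real^'n" where
  "vIm v = (\<chi> i. Im (v $ i))"

definition mRe :: "complex^'n^'m \<Rightarrow> real^'n^'m" where
  "mRe M = (\<chi> i j. Re (M $ i $ j))"

definition mIm :: "complex^'n^'m \<Rightarrow> real^'n^'m" where
  "mIm M = (\<chi> i j. Im (M $ i $ j))"

text \<open>complex-bilinear extension of the Euclidean scalar product\<close>
definition cdot :: "complex^'n \<Rightarrow> complex^'n \<Rightarrow> complex" where
  "cdot u v = (\<Sum>i\<in>UNIV. u $ i * v $ i)"

definition hnorm2 :: "complex^'n \<Rightarrow> real" where
  "hnorm2 u = (\<Sum>i\<in>UNIV. (cmod (u $ i))\<^sup>2)"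

text \<open>wedge product of (complexified) vectors, as antisymmetric matrix\<close>
definition cwedge :: "complex^'n \<Rightarrow> complex^'n \<Rightarrow> complex^'n^'n" where
  "cwedge u v = (\<chi> i j. u $ i * v $ j - u $ j * v $ i)"

definition dz :: "(complex \<Rightarrow> complex^'n) \<Rightarrow> complex \<Rightarrow> complex^'n" where
  "dz F z = (1/2) *s (pd1 F z - \<i> *s pd2 F z)"

definition dzb :: "(complex \<Rightarrow> complex^'n) \<Rightarrow> complex \<Rightarrow> complex^'n" where
  "dzb F z = (1/2) *s (pd1 F z + \<i> *s pd2 F z)"

definition dzb_real :: "(complex \<Rightarrow> real) \<Rightarrow> complex \<Rightarrow> complex" where
  "dzb_real f z = (complex_of_real (pd1 f z) + \<i> * complex_of_real (pd2 f z)) / 2"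

definition cT :: "(complex \<Rightarrow> real^'n) \<Rightarrow> complex \<Rightarrow> complex^'n \<Rightarrow> complex^'n" where
  "cT \<Phi> z v = cvec (tproj \<Phi> z (vRe v)) + \<i> *s cvec (tproj \<Phi> z (vIm v))"

definition cN :: "(complex \<Rightarrow> real^'n) \<Rightarrow> complex \<Rightarrow> complex^'n \<Rightarrow> complex^'n" where
  "cN \<Phi> z v = cvec (nproj \<Phi> z (vRe v)) + \<i> *s cvec (nproj \<Phi> z (vIm v))"

definition Pz :: "(complex \<Rightarrow> real^'n) \<Rightarrow> complex \<Rightarrow> complex^'n" where
  "Pz \<Phi> = dz (\<lambda>w. cvec (\<Phi> w))"

definition Pzb :: "(complex \<Rightarrow> real^'n) \<Rightarrow> complex \<Rightarrow> complex^'n" where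
  "Pzb \<Phi> = dzb (\<lambda>w. cvec (\<Phi> w))"

text \<open>Weingarten tensor h_0 = 2 II(d_z Phi, d_z Phi) dz^2 = h0c dz^2\<close>
definition h0c :: "(complex \<Rightarrow> real^'n) \<Rightarrow> complex \<Rightarrow> complex^'n" where
  "h0c \<Phi> z = 2 *s cN \<Phi> z (dz (Pz \<Phi>) z)"

text \<open>|h_0|^2_WP = |H_0|^2 with h_0 = e^{2 lambda} H_0 dz^2\<close>
definition wp2 :: "(complex \<Rightarrow> real^'n) \<Rightarrow> complex \<Rightarrow> real" where
  "wp2 \<Phi> z = hnorm2 (complex_of_real (1 / e2l \<Phi> z) *s h0c \<Phi> z)"

text \<open>omega = omegac dz, where
  omega = g^{-1} (x) (dbar^N - dbar^T) h_0 - |h_0|^2_WP d Phi\<close>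
definition omegac :: "(complex \<Rightarrow> real^'n) \<Rightarrow> complex \<Rightarrow> complex^'n" where
  "omegac \<Phi> z = complex_of_real (1 / e2l \<Phi> z) *s
        (cN \<Phi> z (dzb (h0c \<Phi>) z) - cT \<Phi> z (dzb (h0c \<Phi>) z))
      - complex_of_real (wp2 \<Phi> z) *s Pz \<Phi> z"

definition invI :: "(complex \<Rightarrow> real^'n) \<Rightarrow> complex \<Rightarrow> complex^'n \<Rightarrow> complex^'n" where
  "invI \<Phi> z X = complex_of_real ((norm (\<Phi> z))\<^sup>2) *s X - (2 * cdot (cvec (\<Phi> z)) X) *s cvec (\<Phi> z)"

text \<open>the dz-coefficients of the four complex 1-forms\<close>
definition form_transl :: "(complex \<Rightarrow> real^'n) \<Rightarrow> complex \<Rightarrow> complex^'n" where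
  "form_transl \<Phi> z = omegac \<Phi> z"

definition form_rot :: "(complex \<Rightarrow> real^'n) \<Rightarrow> complex \<Rightarrow> complex^'n^'n" where
  "form_rot \<Phi> z = cwedge (cvec (\<Phi> z)) (omegac \<Phi> z)
      + (1 / e2l \<Phi> z) *\<^sub>R cwedge (h0c \<Phi> z) (Pzb \<Phi> z)"

definition form_dil :: "(complex \<Rightarrow> real^'n) \<Rightarrow> complex \<Rightarrow> complex" where
  "form_dil \<Phi> z = cdot (cvec (\<Phi> z)) (omegac \<Phi> z)"

definition form_inv :: "(complex \<Rightarrow> real^'n) \<Rightarrow> complex \<Rightarrow> complex^'n" where
  "form_inv \<Phi> z = invI \<Phi> z (omegac \<Phi> z)
      - complex_of_real (1 / e2l \<Phi> z) *s
          (dzb_real (\<lambda>w. (norm (\<Phi> w))\<^sup>2) z *s h0c \<Phi> z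
           - (2 * cdot (cvec (\<Phi> z)) (h0c \<Phi> z)) *s Pzb \<Phi> z)"

text \<open>The real 1-form A dx1 + B dx2 is (smooth enough and) closed on U: d_1 B = d_2 A.
  For a complex form F dz, Im(F dz) = (Im F) dx1 + (Re F) dx2.\<close>
definition closed_form_on :: "complex set \<Rightarrow> (complex \<Rightarrow> 'a::real_normed_vector) \<Rightarrow> (complex \<Rightarrow> 'a) \<Rightarrow> bool" where
  "closed_form_on U A B \<longleftrightarrow>
     (\<forall>z\<in>U. A differentiable (at z) \<and> B differentiable (at z) \<and> pd1 B z = pd2 A z)"

end

theory Submission
  imports Defs "HOL-Analysis.Analysis"
begin

text \<open>In the chart, conformality means \<open>\<langle>p, p\<rangle> = 0\<close> and \<open>\<langle>p, cnj p\<rangle> = e^(2 lambda)/2\<close> for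
  \<open>p = d_z Phi\<close>. Differentiating these relations gives the structure equations
  \<open>d_zbar p = e^(2 lambda) H/2\<close> and \<open>d_z p = 2 (d_z lambda) p + h0/2\<close>, and, commuting
  derivatives, the Codazzi equation \<open>(d_zbar h0)^N = e^(2 lambda) (d_z H)^N\<close>, from which
  \<open>\<omega> = (d_z H + |H|^2 p + 2 e^(-2 lambda) \<langle>H, h0\<rangle> cnj p) dz\<close>. Expressing the normal Laplacian
  of \<open>H\<close> through \<open>d_zbar d_z H\<close> turns the Willmore equation into \<open>Re (d_zbar \<omega>) = 0\<close>, which is
  the closedness of \<open>Im \<omega>\<close>. For the three other forms \<open>f dz\<close>, the derivative \<open>d_zbar f\<close> is an
  expression in \<open>\<Phi>\<close> and \<open>d_zbar \<omega>\<close> (namely \<open>\<Phi> \<and> d_zbar \<omega>\<close>, \<open>\<langle>\<Phi>, d_zbar \<omega>\<rangle>\<close> and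
  \<open>I_Phi(d_zbar \<omega>)\<close>) plus terms of the form \<open>Y - cnj Y\<close>, so its real part vanishes as well.\<close>

definition dir_deriv :: "complex \<Rightarrow> (complex \<Rightarrow> 'a::real_normed_vector) \<Rightarrow> complex \<Rightarrow> 'a" where
  "dir_deriv v f z = frechet_derivative f (at z) v"

lemma pd1_eq_dir_deriv: "pd1 f z = dir_deriv 1 f z" by (simp add: pd1_def dir_deriv_def)
lemma pd2_eq_dir_deriv: "pd2 f z = dir_deriv \<i> f z" by (simp add: pd2_def dir_deriv_def)

lemma has_derivative_dir_deriv:
  fixes f :: "complex \<Rightarrow> 'a::real_normed_vector"
  assumes "f differentiable (at z)"
  shows "(f has_derivative (\<lambda>h. dir_deriv h f z)) (at z)"
  using frechet_derivative_works assms unfolding dir_deriv_def by (metis eta_contract_eq)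

lemma dir_deriv_eqI:
  fixes f :: "complex \<Rightarrow> 'a::real_normed_vector"
  assumes "(f has_derivative f') (at z)"
  shows "dir_deriv v f z = f' v"
  using frechet_derivative_at[OF assms] unfolding dir_deriv_def by simp

lemma dir_deriv_bilinear:
  assumes "bounded_bilinear bop" "f differentiable (at z)" "g differentiable (at z)"
  shows "dir_deriv v (\<lambda>w. bop (f w) (g w)) z = bop (dir_deriv v f z) (g z) + bop (f z) (dir_deriv v g z)"
proof -
  have "((\<lambda>w. bop (f w) (g w)) has_derivative
      (\<lambda>h. bop (f z) (dir_deriv h g z) + bop (dir_deriv h f z) (g z))) (at z)"
    using bounded_bilinear.FDERIV[OF assms(1) has_derivative_dir_deriv[OF assms(2)] has_derivative_dir_deriv[OF assms(3)]] .
  from dir_deriv_eqI[OF this] show ?thesis by (simp add: add.commute)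
qed

lemma dir_deriv_linear:
  assumes "bounded_linear L" "f differentiable (at z)"
  shows "dir_deriv v (\<lambda>w. L (f w)) z = L (dir_deriv v f z)"
proof -
  have "((\<lambda>w. L (f w)) has_derivative (\<lambda>h. L (dir_deriv h f z))) (at z)"
    using bounded_linear.has_derivative[OF assms(1) has_derivative_dir_deriv[OF assms(2)]] .
  from dir_deriv_eqI[OF this] show ?thesis .
qed

lemma dir_deriv_add:
  assumes "f differentiable (at z)" "g differentiable (at z)"
  shows "dir_deriv v (\<lambda>w. f w + g w) z = dir_deriv v f z + dir_deriv v g z"
  using dir_deriv_eqI[OF has_derivative_add[OF has_derivative_dir_deriv[OF assms(1)] has_derivative_dir_deriv[OF assms(2)]]] by simp

lemma dir_deriv_diff:
  assumes "f differentiable (at z)" "g differentiable (at z)"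
  shows "dir_deriv v (\<lambda>w. f w - g w) z = dir_deriv v f z - dir_deriv v g z"
  using dir_deriv_eqI[OF has_derivative_diff[OF has_derivative_dir_deriv[OF assms(1)] has_derivative_dir_deriv[OF assms(2)]]] by simp

lemma dir_deriv_const: "dir_deriv v (\<lambda>w. c) z = 0"
proof -
  have "((\<lambda>w. c) has_derivative (\<lambda>h. 0)) (at z)" by (rule has_derivative_const)
  from dir_deriv_eqI[OF this] show ?thesis .
qed

lemma dir_deriv_inverse:
  fixes f :: "complex \<Rightarrow> 'a::real_normed_field"
  assumes "f differentiable (at z)" "f z \<noteq> 0"
  shows "dir_deriv v (\<lambda>w. inverse (f w)) z = - (inverse (f z) * dir_deriv v f z * inverse (f z))"
proof -
  have "((\<lambda>w. inverse (f w)) has_derivative (\<lambda>h. - (inverse (f z) * dir_deriv h f z * inverse (f z)))) (at z)"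
    by (rule Deriv.has_derivative_inverse[OF assms(2) has_derivative_dir_deriv[OF assms(1)]])
  from dir_deriv_eqI[OF this] show ?thesis .
qed

lemma has_derivative_cong_open:
  assumes "open U" "z \<in> U" "\<And>w. w \<in> U \<Longrightarrow> f w = g w"
  shows "(f has_derivative f') (at z) \<longleftrightarrow> (g has_derivative f') (at z)"
  using has_derivative_transform_within_open[OF _ assms(1,2)] assms(3) by metis

lemma dir_deriv_cong:
  assumes "open U" "z \<in> U" "\<And>w. w \<in> U \<Longrightarrow> f w = g w"
  shows "dir_deriv v f z = dir_deriv v g z"
proof -
  have "frechet_derivative f (at z) = frechet_derivative g (at z)"
    unfolding frechet_derivative_def using has_derivative_cong_open[OF assms] by simp
  then show ?thesis unfolding dir_deriv_def by simp
qed

lemma differentiable_cong_open: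
  assumes "open U" "z \<in> U" "\<And>w. w \<in> U \<Longrightarrow> f w = g w"
  shows "f differentiable (at z) \<longleftrightarrow> g differentiable (at z)"
  unfolding differentiable_def using has_derivative_cong_open[OF assms] by simp

lemma pd1_cong: "open U \<Longrightarrow> z \<in> U \<Longrightarrow> (\<And>w. w \<in> U \<Longrightarrow> f w = g w) \<Longrightarrow> pd1 f z = pd1 g z"
  unfolding pd1_eq_dir_deriv by (rule dir_deriv_cong)
lemma pd2_cong: "open U \<Longrightarrow> z \<in> U \<Longrightarrow> (\<And>w. w \<in> U \<Longrightarrow> f w = g w) \<Longrightarrow> pd2 f z = pd2 g z"
  unfolding pd2_eq_dir_deriv by (rule dir_deriv_cong)

lemma bounded_bilinear_differentiable_on:
  assumes "bounded_bilinear bop" "f differentiable_on S" "g differentiable_on S"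
  shows "(\<lambda>w. bop (f w) (g w)) differentiable_on S"
  unfolding differentiable_on_def
proof
  fix x assume "x \<in> S"
  then obtain f' g' where "(f has_derivative f') (at x within S)" "(g has_derivative g') (at x within S)"
    using assms(2,3) unfolding differentiable_on_def differentiable_def by blast
  from bounded_bilinear.FDERIV[OF assms(1) this] show "(\<lambda>w. bop (f w) (g w)) differentiable at x within S"
    unfolding differentiable_def by blast
qed

lemma bounded_linear_differentiable_on:
  assumes "bounded_linear L" "f differentiable_on S"
  shows "(\<lambda>w. L (f w)) differentiable_on S"
  unfolding differentiable_on_def
proof
  fix x assume "x \<in> S"
  then obtain f' where "(f has_derivative f') (at x within S)"
    using assms(2) unfolding differentiable_on_def differentiable_def by blast
  from bounded_linear.has_derivative[OF assms(1) this] show "(\<lambda>w. L (f w)) differentiable at x within S"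
    unfolding differentiable_def by blast
qed

lemma bounded_bilinear_differentiable_at: "bounded_bilinear bop \<Longrightarrow> f differentiable (at z) \<Longrightarrow> g differentiable (at z) \<Longrightarrow>
  (\<lambda>w. bop (f w) (g w)) differentiable (at z)"
  unfolding differentiable_def using bounded_bilinear.FDERIV by blast
lemma bounded_linear_differentiable_at: "bounded_linear L \<Longrightarrow> f differentiable (at z) \<Longrightarrow> (\<lambda>w. L (f w)) differentiable (at z)"
  unfolding differentiable_def using bounded_linear.has_derivative by blast

lemma Ck_on_SucD: "Ck_on (Suc k) U f \<Longrightarrow> Ck_on k U f"
proof (induction k arbitrary: f)
  case 0
  have "f differentiable_on U" using 0 by (simp only: Ck_on.simps)
  then show ?case using differentiable_imp_continuous_on by (simp only: Ck_on.simps)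
next
  case (Suc k)
  have a: "f differentiable_on U" "Ck_on (Suc k) U (pd1 f)" "Ck_on (Suc k) U (pd2 f)"
    using Suc.prems by (simp_all only: Ck_on.simps)
  have b: "Ck_on k U (pd1 f)" "Ck_on k U (pd2 f)" using Suc.IH a by blast+
  show ?case using a(1) b by (simp only: Ck_on.simps) 
qed

lemma Ck_on_cong:
  assumes "open U" "\<And>w. w \<in> U \<Longrightarrow> f w = g w" "Ck_on k U f"
  shows "Ck_on k U g"
  using assms(2,3)
proof (induction k arbitrary: f g)
  case 0
  then show ?case using continuous_on_cong by (metis Ck_on.simps(1))
next
  case (Suc k)
  have a: "f differentiable_on U" "Ck_on k U (pd1 f)" "Ck_on k U (pd2 f)"
    using Suc.prems(2) by (simp_all only: Ck_on.simps)
  have "\<forall>x\<in>U. f differentiable at x" using a(1) by (simp add: differentiable_on_eq_differentiable_at[OF assms(1)])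
  then have "\<forall>x\<in>U. g differentiable at x" using differentiable_cong_open[OF assms(1) _ Suc.prems(1)] by simp
  then have d: "g differentiable_on U" by (simp add: differentiable_on_eq_differentiable_at[OF assms(1)])
  have e1: "\<And>w. w \<in> U \<Longrightarrow> pd1 f w = pd1 g w"
    by (rule pd1_cong[OF assms(1)]) (use Suc.prems(1) in simp_all)
  have e2: "\<And>w. w \<in> U \<Longrightarrow> pd2 f w = pd2 g w"
    by (rule pd2_cong[OF assms(1)]) (use Suc.prems(1) in simp_all)
  have "Ck_on k U (pd1 g)" by (rule Suc.IH[OF e1 a(2)])
  moreover have "Ck_on k U (pd2 g)" by (rule Suc.IH[OF e2 a(3)])
  ultimately show ?case using d by (simp only: Ck_on.simps; simp)
qed

lemma Ck_on_differentiable_at: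
  assumes "open U" "Ck_on (Suc k) U f" "z \<in> U"
  shows "f differentiable (at z)"
proof -
  have "f differentiable_on U" using assms(2) by (simp only: Ck_on.simps)
  then show ?thesis using differentiable_on_eq_differentiable_at[OF assms(1)] assms(3) by blast
qed

lemma Ck_on_const: "Ck_on k U (\<lambda>w. c)"
proof (induction k arbitrary: c)
  case 0 then show ?case by simp
next
  case (Suc k)
  have "pd1 (\<lambda>w. c) = (\<lambda>w. 0)" "pd2 (\<lambda>w. c) = (\<lambda>w. 0)"
    by (simp_all add: pd1_eq_dir_deriv pd2_eq_dir_deriv dir_deriv_const fun_eq_iff)
  then show ?case using Suc.IH[of 0] by (simp only: Ck_on.simps; simp)
qed

lemma Ck_on_add:
  assumes "open U"
  shows "Ck_on k U f \<Longrightarrow> Ck_on k U g \<Longrightarrow> Ck_on k U (\<lambda>w. f w + g w)"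
proof (induction k arbitrary: f g)
  case 0 then show ?case by (simp add: continuous_on_add)
next
  case (Suc k)
  have df: "\<And>w. w \<in> U \<Longrightarrow> f differentiable (at w)" using Ck_on_differentiable_at[OF assms(1) Suc.prems(1)] .
  have dg: "\<And>w. w \<in> U \<Longrightarrow> g differentiable (at w)" using Ck_on_differentiable_at[OF assms(1) Suc.prems(2)] .
  have a: "f differentiable_on U" "Ck_on k U (pd1 f)" "Ck_on k U (pd2 f)"
    using Suc.prems(1) by (simp_all only: Ck_on.simps)
  have b: "g differentiable_on U" "Ck_on k U (pd1 g)" "Ck_on k U (pd2 g)"
    using Suc.prems(2) by (simp_all only: Ck_on.simps)
  have e1: "pd1 f w + pd1 g w = pd1 (\<lambda>w. f w + g w) w" if w: "w \<in> U" for w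
    unfolding pd1_eq_dir_deriv using dir_deriv_add[OF df[OF w] dg[OF w]] by simp
  have e2: "pd2 f w + pd2 g w = pd2 (\<lambda>w. f w + g w) w" if w: "w \<in> U" for w
    unfolding pd2_eq_dir_deriv using dir_deriv_add[OF df[OF w] dg[OF w]] by simp
  have "Ck_on k U (pd1 (\<lambda>w. f w + g w))" by (rule Ck_on_cong[OF assms e1 Suc.IH[OF a(2) b(2)]])
  moreover have "Ck_on k U (pd2 (\<lambda>w. f w + g w))" by (rule Ck_on_cong[OF assms e2 Suc.IH[OF a(3) b(3)]])
  moreover have "(\<lambda>w. f w + g w) differentiable_on U" using a(1) b(1) by (rule differentiable_on_add)
  ultimately show ?case by (simp only: Ck_on.simps; simp)
qed

lemma Ck_on_bilinear:
  assumes "open U" "bounded_bilinear bop"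
  shows "Ck_on k U f \<Longrightarrow> Ck_on k U g \<Longrightarrow> Ck_on k U (\<lambda>w. bop (f w) (g w))"
proof (induction k arbitrary: f g)
  case 0 then show ?case
    using bounded_bilinear.continuous_on[OF assms(2)] by simp
next
  case (Suc k)
  have df: "\<And>w. w \<in> U \<Longrightarrow> f differentiable (at w)" using Ck_on_differentiable_at[OF assms(1) Suc.prems(1)] .
  have dg: "\<And>w. w \<in> U \<Longrightarrow> g differentiable (at w)" using Ck_on_differentiable_at[OF assms(1) Suc.prems(2)] .
  have fk: "Ck_on k U f" and gk: "Ck_on k U g" using Suc.prems Ck_on_SucD by blast+
  have a: "f differentiable_on U" "Ck_on k U (pd1 f)" "Ck_on k U (pd2 f)"
    using Suc.prems(1) by (simp_all only: Ck_on.simps)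
  have b: "g differentiable_on U" "Ck_on k U (pd1 g)" "Ck_on k U (pd2 g)"
    using Suc.prems(2) by (simp_all only: Ck_on.simps)
  have e1: "bop (pd1 f w) (g w) + bop (f w) (pd1 g w) = pd1 (\<lambda>w. bop (f w) (g w)) w" if w: "w \<in> U" for w
    unfolding pd1_eq_dir_deriv using dir_deriv_bilinear[OF assms(2) df[OF w] dg[OF w]] by simp
  have e2: "bop (pd2 f w) (g w) + bop (f w) (pd2 g w) = pd2 (\<lambda>w. bop (f w) (g w)) w" if w: "w \<in> U" for w
    unfolding pd2_eq_dir_deriv using dir_deriv_bilinear[OF assms(2) df[OF w] dg[OF w]] by simp
  have d: "(\<lambda>w. bop (f w) (g w)) differentiable_on U"
    using a(1) b(1) by (rule bounded_bilinear_differentiable_on[OF assms(2)])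
  have c1: "Ck_on k U (\<lambda>w. bop (pd1 f w) (g w) + bop (f w) (pd1 g w))"
    by (rule Ck_on_add[OF assms(1) Suc.IH[OF a(2) gk] Suc.IH[OF fk b(2)]])
  have c2: "Ck_on k U (\<lambda>w. bop (pd2 f w) (g w) + bop (f w) (pd2 g w))"
    by (rule Ck_on_add[OF assms(1) Suc.IH[OF a(3) gk] Suc.IH[OF fk b(3)]])
  have "Ck_on k U (pd1 (\<lambda>w. bop (f w) (g w)))" by (rule Ck_on_cong[OF assms(1) e1 c1])
  moreover have "Ck_on k U (pd2 (\<lambda>w. bop (f w) (g w)))" by (rule Ck_on_cong[OF assms(1) e2 c2])
  ultimately show ?case using d by (simp only: Ck_on.simps; simp)
qed

lemma Ck_on_linear:
  assumes "open U" "bounded_linear L"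
  shows "Ck_on k U f \<Longrightarrow> Ck_on k U (\<lambda>w. L (f w))"
proof (induction k arbitrary: f)
  case 0 then show ?case
    using linear_continuous_on[OF assms(2)] continuous_on_compose2[OF _ _ subset_UNIV] by (simp; blast)
next
  case (Suc k)
  have df: "\<And>w. w \<in> U \<Longrightarrow> f differentiable (at w)" using Ck_on_differentiable_at[OF assms(1) Suc.prems(1)] .
  have a: "f differentiable_on U" "Ck_on k U (pd1 f)" "Ck_on k U (pd2 f)"
    using Suc.prems(1) by (simp_all only: Ck_on.simps)
  have e1: "L (pd1 f w) = pd1 (\<lambda>w. L (f w)) w" if w: "w \<in> U" for w
    unfolding pd1_eq_dir_deriv using dir_deriv_linear[OF assms(2) df[OF w]] by simp
  have e2: "L (pd2 f w) = pd2 (\<lambda>w. L (f w)) w" if w: "w \<in> U" for w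
    unfolding pd2_eq_dir_deriv using dir_deriv_linear[OF assms(2) df[OF w]] by simp
  have d: "(\<lambda>w. L (f w)) differentiable_on U"
    using a(1) by (rule bounded_linear_differentiable_on[OF assms(2)])
  have "Ck_on k U (pd1 (\<lambda>w. L (f w)))" by (rule Ck_on_cong[OF assms(1) e1 Suc.IH[OF a(2)]])
  moreover have "Ck_on k U (pd2 (\<lambda>w. L (f w)))" by (rule Ck_on_cong[OF assms(1) e2 Suc.IH[OF a(3)]])
  ultimately show ?case using d by (simp only: Ck_on.simps; simp)
qed

lemma Ck_on_inverse:
  fixes f :: "complex \<Rightarrow> 'a::real_normed_field"
  assumes "open U" "\<And>w. w \<in> U \<Longrightarrow> f w \<noteq> 0"
  shows "Ck_on k U f \<Longrightarrow> Ck_on k U (\<lambda>w. inverse (f w))"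
proof (induction k)
  case 0 then show ?case
    unfolding Ck_on.simps by (rule continuous_on_inverse) (use assms(2) in auto)
next
  case (Suc k)
  have fk: "Ck_on k U f" using Suc.prems Ck_on_SucD by blast
  have ik: "Ck_on k U (\<lambda>w. inverse (f w))" using Suc.IH fk by blast
  have bl: "bounded_bilinear (\<lambda>a b::'a. a * b)" by (rule bounded_bilinear_mult)
  have e1: "\<And>w. w \<in> U \<Longrightarrow> - (inverse (f w) * pd1 f w * inverse (f w)) = pd1 (\<lambda>w. inverse (f w)) w"
    unfolding pd1_eq_dir_deriv by (rule dir_deriv_inverse[symmetric], rule Ck_on_differentiable_at[OF assms(1) Suc.prems], auto simp: assms(2))
  have e2: "\<And>w. w \<in> U \<Longrightarrow> - (inverse (f w) * pd2 f w * inverse (f w)) = pd2 (\<lambda>w. inverse (f w)) w"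
    unfolding pd2_eq_dir_deriv by (rule dir_deriv_inverse[symmetric], rule Ck_on_differentiable_at[OF assms(1) Suc.prems], auto simp: assms(2))
  have bl2: "bounded_linear (\<lambda>a::'a. - a)" by (simp add: bounded_linear_minus bounded_linear_ident)
  have p1: "Ck_on k U (pd1 f)" and p2: "Ck_on k U (pd2 f)" using Suc.prems by auto
  have c1: "Ck_on k U (\<lambda>w. - (inverse (f w) * pd1 f w * inverse (f w)))"
    using Ck_on_linear[OF assms(1) bl2, OF Ck_on_bilinear[OF assms(1) bl, OF Ck_on_bilinear[OF assms(1) bl, OF ik p1] ik]] .
  have c2: "Ck_on k U (\<lambda>w. - (inverse (f w) * pd2 f w * inverse (f w)))"
    using Ck_on_linear[OF assms(1) bl2, OF Ck_on_bilinear[OF assms(1) bl, OF Ck_on_bilinear[OF assms(1) bl, OF ik p2] ik]] .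
  have d: "(\<lambda>w. inverse (f w)) differentiable_on U"
    by (rule differentiable_on_inverse) (use Suc.prems assms(2) in auto)
  show ?case using d Ck_on_cong[OF assms(1) e1 c1] Ck_on_cong[OF assms(1) e2 c2] by simp
qed

section \<open>Symmetry of second derivatives\<close>

lemma dir_deriv_scaleR:
  fixes f :: "complex \<Rightarrow> 'a::real_normed_vector"
  assumes "f differentiable (at w)"
  shows "dir_deriv (r *\<^sub>R d) f w = r *\<^sub>R dir_deriv d f w"
proof -
  interpret L: bounded_linear "\<lambda>h. dir_deriv h f w"
    using has_derivative_bounded_linear[OF has_derivative_dir_deriv[OF assms]] .
  show ?thesis using L.scaleR[of r d] by simp
qed

lemma has_field_derivative_along_line:
  fixes f :: "complex \<Rightarrow> real"
  assumes "f differentiable (at (a + t *\<^sub>R d))"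
  shows "((\<lambda>t. f (a + t *\<^sub>R d)) has_field_derivative dir_deriv d f (a + t *\<^sub>R d)) (at t)"
proof -
  have line: "((\<lambda>t. a + t *\<^sub>R d) has_derivative (\<lambda>h. h *\<^sub>R d)) (at t)"
    by (auto intro!: derivative_eq_intros)
  have "((\<lambda>t. f (a + t *\<^sub>R d)) has_derivative (\<lambda>h. dir_deriv (h *\<^sub>R d) f (a + t *\<^sub>R d))) (at t)"
    using has_derivative_compose[OF line has_derivative_dir_deriv[OF assms]] by simp
  moreover have "(\<lambda>h. dir_deriv (h *\<^sub>R d) f (a + t *\<^sub>R d)) = (*) (dir_deriv d f (a + t *\<^sub>R d))"
    by (simp add: fun_eq_iff dir_deriv_scaleR[OF assms])
  ultimately show ?thesis unfolding has_field_derivative_def by simp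
qed

lemma second_difference_mean_value:
  fixes f :: "complex \<Rightarrow> real"
  assumes h: "h > 0"
    and diff: "\<And>s u. 0 \<le> s \<Longrightarrow> s \<le> h \<Longrightarrow> 0 \<le> u \<Longrightarrow> u \<le> h \<Longrightarrow>
      f differentiable (at (a + s *\<^sub>R d1 + u *\<^sub>R d2)) \<and>
      dir_deriv d1 f differentiable (at (a + s *\<^sub>R d1 + u *\<^sub>R d2))"
  obtains s u where "0 < s" "s < h" "0 < u" "u < h"
    "f (a + h *\<^sub>R d1 + h *\<^sub>R d2) - f (a + h *\<^sub>R d1) - f (a + h *\<^sub>R d2) + f a
       = h * h * dir_deriv d2 (dir_deriv d1 f) (a + s *\<^sub>R d1 + u *\<^sub>R d2)"
proof -
  define g where "g t = f ((a + h *\<^sub>R d2) + t *\<^sub>R d1) - f ((a + 0 *\<^sub>R d2) + t *\<^sub>R d1)" for t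
  have "\<exists>s. 0 < s \<and> s < h \<and> g h - g 0 = (h - 0) *
      (dir_deriv d1 f ((a + h *\<^sub>R d2) + s *\<^sub>R d1) - dir_deriv d1 f ((a + 0 *\<^sub>R d2) + s *\<^sub>R d1))"
  proof (rule MVT2[OF h])
    fix t assume t: "0 \<le> t" "t \<le> h"
    have A: "((\<lambda>t. f ((a + u *\<^sub>R d2) + t *\<^sub>R d1)) has_field_derivative
        dir_deriv d1 f ((a + u *\<^sub>R d2) + t *\<^sub>R d1)) (at t)" if "0 \<le> u" "u \<le> h" for u
      by (rule has_field_derivative_along_line) (use diff[OF t that] in \<open>simp add: add_ac\<close>)
    show "(g has_real_derivative dir_deriv d1 f ((a + h *\<^sub>R d2) + t *\<^sub>R d1)
        - dir_deriv d1 f ((a + 0 *\<^sub>R d2) + t *\<^sub>R d1)) (at t)"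
      unfolding g_def using DERIV_diff[OF A[of h] A[of 0]] h by simp
  qed
  then obtain s where s: "0 < s" "s < h"
    "g h - g 0 = h * (dir_deriv d1 f (a + s *\<^sub>R d1 + h *\<^sub>R d2) - dir_deriv d1 f (a + s *\<^sub>R d1))"
    by (auto simp: add_ac)
  have "\<exists>u. 0 < u \<and> u < h \<and> dir_deriv d1 f ((a + s *\<^sub>R d1) + h *\<^sub>R d2) - dir_deriv d1 f ((a + s *\<^sub>R d1) + 0 *\<^sub>R d2)
      = (h - 0) * dir_deriv d2 (dir_deriv d1 f) ((a + s *\<^sub>R d1) + u *\<^sub>R d2)"
    by (rule MVT2[OF h], rule has_field_derivative_along_line) (use diff s in auto)
  then obtain u where "0 < u" "u < h"
    "dir_deriv d1 f (a + s *\<^sub>R d1 + h *\<^sub>R d2) - dir_deriv d1 f (a + s *\<^sub>R d1)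
      = h * dir_deriv d2 (dir_deriv d1 f) (a + s *\<^sub>R d1 + u *\<^sub>R d2)"
    by auto
  with s show thesis by (intro that[of s u]) (auto simp: g_def add_ac)
qed

lemma Ck_on_2D:
  assumes "open U" "Ck_on 2 U f" "w \<in> U"
  shows "f differentiable (at w)" "pd1 f differentiable (at w)" "pd2 f differentiable (at w)"
proof -
  have "f differentiable_on U" "pd1 f differentiable_on U" "pd2 f differentiable_on U"
    using assms(2) by (simp_all add: numeral_2_eq_2)
  then show "f differentiable (at w)" "pd1 f differentiable (at w)" "pd2 f differentiable (at w)"
    using assms(1,3) by (simp_all add: differentiable_on_eq_differentiable_at)
qed

lemma parallelogram_in_ball:
  fixes d1 d2 :: "'a::real_normed_vector"
  assumes "0 \<le> s" "s \<le> h" "0 \<le> u" "u \<le> h" "norm d1 = 1" "norm d2 = 1" "2 * h < r"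
  shows "z + s *\<^sub>R d1 + u *\<^sub>R d2 \<in> ball z r"
proof -
  have "norm (s *\<^sub>R d1 + u *\<^sub>R d2) \<le> s + u"
    using norm_triangle_ineq[of "s *\<^sub>R d1" "u *\<^sub>R d2"] assms(1,3,5,6) by simp
  moreover have "dist z (z + s *\<^sub>R d1 + u *\<^sub>R d2) = norm (s *\<^sub>R d1 + u *\<^sub>R d2)"
    by (metis add.assoc add_0_right dist_0_norm dist_add_cancel)
  ultimately show ?thesis using assms by simp
qed

lemma pd_commute_real:
  fixes f :: "complex \<Rightarrow> real"
  assumes U: "open U" and f: "Ck_on 2 U f" and z: "z \<in> U"
  shows "pd1 (pd2 f) z = pd2 (pd1 f) z"
proof (rule ccontr)
  assume ne: "pd1 (pd2 f) z \<noteq> pd2 (pd1 f) z"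
  define e where "e = \<bar>pd2 (pd1 f) z - pd1 (pd2 f) z\<bar> / 2"
  have e: "e > 0" using ne unfolding e_def by simp
  have cont: "continuous_on U (pd2 (pd1 f))" "continuous_on U (pd1 (pd2 f))"
    using f by (simp_all add: numeral_2_eq_2)
  obtain r where r: "r > 0" "ball z r \<subseteq> U"
    "\<And>w. w \<in> ball z r \<Longrightarrow> dist (pd2 (pd1 f) w) (pd2 (pd1 f) z) < e"
    "\<And>w. w \<in> ball z r \<Longrightarrow> dist (pd1 (pd2 f) w) (pd1 (pd2 f) z) < e"
  proof -
    obtain r0 where "r0 > 0" "ball z r0 \<subseteq> U" using U z open_contains_ball by blast
    moreover obtain r1 where "r1 > 0" "\<And>w. w \<in> U \<Longrightarrow> dist w z < r1 \<Longrightarrow> dist (pd2 (pd1 f) w) (pd2 (pd1 f) z) < e"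
      using cont(1) z e unfolding continuous_on_iff by blast
    moreover obtain r2 where "r2 > 0" "\<And>w. w \<in> U \<Longrightarrow> dist w z < r2 \<Longrightarrow> dist (pd1 (pd2 f) w) (pd1 (pd2 f) z) < e"
      using cont(2) z e unfolding continuous_on_iff by blast
    ultimately show thesis
      by (intro that[of "min r0 (min r1 r2)"]) (auto simp: dist_commute subset_iff)
  qed
  define h where "h = r / 4"
  have h: "h > 0" using r unfolding h_def by simp
  have in_ball: "z + s *\<^sub>R d1 + u *\<^sub>R d2 \<in> ball z r"
    if "0 \<le> s" "s \<le> h" "0 \<le> u" "u \<le> h" "d1 \<in> {1, \<i>}" "d2 \<in> {1, \<i>}" for s u d1 d2
    by (rule parallelogram_in_ball[where h = h]) (use that r(1) in \<open>auto simp: h_def\<close>)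
  note D = Ck_on_2D[OF U f]
  have pd_eq: "pd1 g = dir_deriv 1 g" "pd2 g = dir_deriv \<i> g" for g :: "complex \<Rightarrow> real"
    by (simp_all add: fun_eq_iff pd1_eq_dir_deriv pd2_eq_dir_deriv)
  define \<Delta> where "\<Delta> = f (z + h *\<^sub>R 1 + h *\<^sub>R \<i>) - f (z + h *\<^sub>R 1) - f (z + h *\<^sub>R \<i>) + f z"
  obtain s u where su: "0 < s" "s < h" "0 < u" "u < h"
    "\<Delta> = h * h * pd2 (pd1 f) (z + s *\<^sub>R 1 + u *\<^sub>R \<i>)"
    by (rule second_difference_mean_value[OF h, of f z 1 \<i>])
      (use D in_ball r(2) in \<open>auto simp: \<Delta>_def pd_eq subset_iff\<close>)
  obtain s' u' where su': "0 < s'" "s' < h" "0 < u'" "u' < h"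
    "\<Delta> = h * h * pd1 (pd2 f) (z + s' *\<^sub>R \<i> + u' *\<^sub>R 1)"
    by (rule second_difference_mean_value[OF h, of f z \<i> 1])
      (use D in_ball r(2) in \<open>auto simp: \<Delta>_def pd_eq subset_iff algebra_simps\<close>)
  have "\<bar>\<Delta> / (h * h) - pd2 (pd1 f) z\<bar> < e"
    using r(3)[OF in_ball[of s u 1 \<i>]] su h by (simp add: dist_real_def)
  moreover have "\<bar>\<Delta> / (h * h) - pd1 (pd2 f) z\<bar> < e"
    using r(4)[OF in_ball[of s' u' \<i> 1]] su' h by (simp add: dist_real_def)
  moreover have "\<bar>d - a\<bar> < \<bar>a - b\<bar> / 2 \<Longrightarrow> \<bar>d - b\<bar> < \<bar>a - b\<bar> / 2 \<Longrightarrow> False" for d a b :: real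
    by (simp add: abs_if split: if_splits)
  ultimately show False unfolding e_def by blast
qed

lemma pd_commute:
  fixes f :: "complex \<Rightarrow> 'a::euclidean_space"
  assumes U: "open U" and f: "Ck_on 2 U f" and z: "z \<in> U"
  shows "pd1 (pd2 f) z = pd2 (pd1 f) z"
proof (rule euclidean_eqI)
  fix b :: 'a assume b: "b \<in> Basis"
  note D = Ck_on_2D[OF U f]
  define g where "g w = f w \<bullet> b" for w
  have bl: "bounded_linear (\<lambda>x::'a. x \<bullet> b)" by (rule bounded_linear_inner_left)
  have g2: "Ck_on 2 U g" unfolding g_def by (rule Ck_on_linear[OF U bl f])
  have e1: "pd2 g w = pd2 f w \<bullet> b" if "w \<in> U" for w
    unfolding g_def pd2_eq_dir_deriv using dir_deriv_linear[OF bl D(1)[OF that]] .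
  have e2: "pd1 g w = pd1 f w \<bullet> b" if "w \<in> U" for w
    unfolding g_def pd1_eq_dir_deriv using dir_deriv_linear[OF bl D(1)[OF that]] .
  have "pd1 (pd2 f) z \<bullet> b = pd1 (\<lambda>w. pd2 f w \<bullet> b) z"
    unfolding pd1_eq_dir_deriv using dir_deriv_linear[OF bl D(3)[OF z]] by simp
  also have "\<dots> = pd1 (pd2 g) z" by (rule pd1_cong[OF U z]) (simp add: e1)
  also have "\<dots> = pd2 (pd1 g) z" by (rule pd_commute_real[OF U g2 z])
  also have "\<dots> = pd2 (\<lambda>w. pd1 f w \<bullet> b) z" by (rule pd2_cong[OF U z]) (simp add: e2)
  also have "\<dots> = pd2 (pd1 f) z \<bullet> b"
    unfolding pd2_eq_dir_deriv using dir_deriv_linear[OF bl D(2)[OF z]] by simp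
  finally show "pd1 (pd2 f) z \<bullet> b = pd2 (pd1 f) z \<bullet> b" .
qed

lemma scaleR_conv_of_real: "r *\<^sub>R (c::complex) = complex_of_real r * c" by (simp add: scaleR_conv_of_real)

lemma bounded_bilinear_vec_smult: "bounded_bilinear (\<lambda>(c::complex) (v::complex^'n). c *s v)"
proof -
  have "bilinear (\<lambda>(c::complex) (v::complex^'n). c *s v)"
    unfolding bilinear_def
    by (auto intro!: linearI simp: vec_eq_iff algebra_simps scaleR_conv_of_real)
  then show ?thesis using bilinear_conv_bounded_bilinear by blast
qed

lemma bounded_bilinear_cdot: "bounded_bilinear (cdot :: complex^'n \<Rightarrow> complex^'n \<Rightarrow> complex)"
proof -
  have "bilinear (cdot :: complex^'n \<Rightarrow> complex^'n \<Rightarrow> complex)"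
  proof -
    have a: "cdot (x + y) b = cdot x b + cdot y b" "cdot b (x + y) = cdot b x + cdot b y"
      "cdot (r *\<^sub>R x) b = r *\<^sub>R cdot x b" "cdot b (r *\<^sub>R x) = r *\<^sub>R cdot b x"
      for x y b :: "complex^'n" and r :: real
      unfolding cdot_def by (simp_all only: vector_add_component vector_scaleR_component scaleR_conv_of_real
          sum.distrib sum_distrib_left distrib_right distrib_left mult_ac)
    show ?thesis unfolding bilinear_def by (auto intro!: linearI simp: a)
  qed
  then show ?thesis using bilinear_conv_bounded_bilinear by blast
qed

lemma bounded_bilinear_cwedge: "bounded_bilinear (cwedge :: complex^'n \<Rightarrow> complex^'n \<Rightarrow> complex^'n^'n)"
proof -
  have "bilinear (cwedge :: complex^'n \<Rightarrow> complex^'n \<Rightarrow> complex^'n^'n)"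
    unfolding bilinear_def cwedge_def
    by (auto intro!: linearI simp: vec_eq_iff algebra_simps scaleR_conv_of_real)
  then show ?thesis using bilinear_conv_bounded_bilinear by blast
qed

lemma bounded_linear_cvec: "bounded_linear (cvec :: real^'n \<Rightarrow> complex^'n)"
proof -
  have "linear (cvec :: real^'n \<Rightarrow> complex^'n)"
    unfolding cvec_def by (auto intro!: linearI simp: vec_eq_iff scaleR_conv_of_real)
  then show ?thesis using linear_conv_bounded_linear by blast
qed

lemma bounded_linear_vRe: "bounded_linear (vRe :: complex^'n \<Rightarrow> real^'n)"
proof -
  have "linear (vRe :: complex^'n \<Rightarrow> real^'n)"
    unfolding vRe_def by (auto intro!: linearI simp: vec_eq_iff scaleR_conv_of_real)
  then show ?thesis using linear_conv_bounded_linear by blast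
qed

lemma bounded_linear_vIm: "bounded_linear (vIm :: complex^'n \<Rightarrow> real^'n)"
proof -
  have "linear (vIm :: complex^'n \<Rightarrow> real^'n)"
    unfolding vIm_def by (auto intro!: linearI simp: vec_eq_iff scaleR_conv_of_real)
  then show ?thesis using linear_conv_bounded_linear by blast
qed

lemma bounded_linear_mRe: "bounded_linear (mRe :: complex^'n^'m \<Rightarrow> real^'n^'m)"
proof -
  have "linear (mRe :: complex^'n^'m \<Rightarrow> real^'n^'m)"
    unfolding mRe_def by (auto intro!: linearI simp: vec_eq_iff scaleR_conv_of_real)
  then show ?thesis using linear_conv_bounded_linear by blast
qed

lemma bounded_linear_mIm: "bounded_linear (mIm :: complex^'n^'m \<Rightarrow> real^'n^'m)"
proof -
  have "linear (mIm :: complex^'n^'m \<Rightarrow> real^'n^'m)"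
    unfolding mIm_def by (auto intro!: linearI simp: vec_eq_iff scaleR_conv_of_real)
  then show ?thesis using linear_conv_bounded_linear by blast
qed

lemma bounded_linear_vec_smult_const: "bounded_linear (\<lambda>v::complex^'n. c *s v)"
  using bounded_bilinear.bounded_linear_right[OF bounded_bilinear_vec_smult] .

definition vcnj :: "complex^'n \<Rightarrow> complex^'n" where
  "vcnj v = (\<chi> i. cnj (v $ i))"

lemma bounded_linear_vcnj: "bounded_linear (vcnj :: complex^'n \<Rightarrow> complex^'n)"
proof -
  have "linear (vcnj :: complex^'n \<Rightarrow> complex^'n)"
    unfolding vcnj_def by (auto intro!: linearI simp: vec_eq_iff scaleR_conv_of_real)
  then show ?thesis using linear_conv_bounded_linear by blast
qed

lemma smooth_on_bilinear: "open U \<Longrightarrow> bounded_bilinear bop \<Longrightarrow> smooth_on U f \<Longrightarrow> smooth_on U g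
  \<Longrightarrow> smooth_on U (\<lambda>w. bop (f w) (g w))"
  unfolding smooth_on_def using Ck_on_bilinear by blast

lemma smooth_on_linear: "open U \<Longrightarrow> bounded_linear L \<Longrightarrow> smooth_on U f \<Longrightarrow> smooth_on U (\<lambda>w. L (f w))"
  unfolding smooth_on_def using Ck_on_linear by blast

lemma smooth_on_add: "open U \<Longrightarrow> smooth_on U f \<Longrightarrow> smooth_on U g \<Longrightarrow> smooth_on U (\<lambda>w. f w + g w)"
  unfolding smooth_on_def using Ck_on_add by blast

lemma smooth_on_minus: "open U \<Longrightarrow> smooth_on U f \<Longrightarrow> smooth_on U (\<lambda>w. - f w)"
  using smooth_on_linear[of U "\<lambda>x. - x" f] bounded_linear_minus[OF bounded_linear_ident] by simp

lemma smooth_on_diff: "open U \<Longrightarrow> smooth_on U f \<Longrightarrow> smooth_on U g \<Longrightarrow> smooth_on U (\<lambda>w. f w - g w)"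
  using smooth_on_add[of U f "\<lambda>w. - g w"] smooth_on_minus[of U g] by simp

lemma smooth_on_const: "smooth_on U (\<lambda>w. c)"
  unfolding smooth_on_def using Ck_on_const by blast

lemma smooth_on_inverse: "open U \<Longrightarrow> (\<And>w. w \<in> U \<Longrightarrow> f w \<noteq> 0) \<Longrightarrow> smooth_on U (f :: complex \<Rightarrow> 'a::real_normed_field)
   \<Longrightarrow> smooth_on U (\<lambda>w. inverse (f w))"
  unfolding smooth_on_def using Ck_on_inverse by blast

lemma smooth_on_pd1: "smooth_on U f \<Longrightarrow> smooth_on U (pd1 f)"
  unfolding smooth_on_def
proof
  fix k assume "\<forall>k. Ck_on k U f"
  then have "Ck_on (Suc k) U f" by blast
  then show "Ck_on k U (pd1 f)" by (simp only: Ck_on.simps)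
qed

lemma smooth_on_pd2: "smooth_on U f \<Longrightarrow> smooth_on U (pd2 f)"
  unfolding smooth_on_def
proof
  fix k assume "\<forall>k. Ck_on k U f"
  then have "Ck_on (Suc k) U f" by blast
  then show "Ck_on k U (pd2 f)" by (simp only: Ck_on.simps)
qed

lemma smooth_on_pdk: "smooth_on U f \<Longrightarrow> smooth_on U (pdk k f)"
  unfolding pdk_def using smooth_on_pd1[of U f] smooth_on_pd2[of U f] by simp

lemma smooth_on_differentiable_at: "open U \<Longrightarrow> smooth_on U f \<Longrightarrow> z \<in> U \<Longrightarrow> f differentiable (at z)"
  unfolding smooth_on_def using Ck_on_differentiable_at by blast

lemma smooth_on_imp_C2: "smooth_on U f \<Longrightarrow> Ck_on 2 U f"
  unfolding smooth_on_def by blast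

lemma smooth_on_mult: "open U \<Longrightarrow> smooth_on U f \<Longrightarrow> smooth_on U g \<Longrightarrow> smooth_on U (\<lambda>w. (f w :: 'a::real_normed_algebra) * g w)"
  by (rule smooth_on_bilinear[OF _ bounded_bilinear_mult])
lemma smooth_on_scaleR: "open U \<Longrightarrow> smooth_on U f \<Longrightarrow> smooth_on U g \<Longrightarrow> smooth_on U (\<lambda>w. f w *\<^sub>R g w)"
  by (rule smooth_on_bilinear[OF _ bounded_bilinear_scaleR])
lemma smooth_on_inner: "open U \<Longrightarrow> smooth_on U f \<Longrightarrow> smooth_on U g \<Longrightarrow> smooth_on U (\<lambda>w. f w \<bullet> g w)"
  by (rule smooth_on_bilinear[OF _ bounded_bilinear_inner])
lemma smooth_on_vec_smult: "open U \<Longrightarrow> smooth_on U f \<Longrightarrow> smooth_on U g \<Longrightarrow> smooth_on U (\<lambda>w. f w *s (g w :: complex^'n))"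
  using smooth_on_bilinear[OF _ bounded_bilinear_vec_smult] by blast
lemma smooth_on_cdot: "open U \<Longrightarrow> smooth_on U f \<Longrightarrow> smooth_on U g \<Longrightarrow> smooth_on U (\<lambda>w. cdot (f w) (g w))"
  using smooth_on_bilinear[OF _ bounded_bilinear_cdot] by blast
lemma smooth_on_cwedge: "open U \<Longrightarrow> smooth_on U f \<Longrightarrow> smooth_on U g \<Longrightarrow> smooth_on U (\<lambda>w. cwedge (f w) (g w))"
  using smooth_on_bilinear[OF _ bounded_bilinear_cwedge] by blast
lemma smooth_on_cvec: "open U \<Longrightarrow> smooth_on U f \<Longrightarrow> smooth_on U (\<lambda>w. cvec (f w))"
  using smooth_on_linear[OF _ bounded_linear_cvec] by blast
lemma smooth_on_vRe: "open U \<Longrightarrow> smooth_on U f \<Longrightarrow> smooth_on U (\<lambda>w. vRe (f w))"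
  using smooth_on_linear[OF _ bounded_linear_vRe] by blast
lemma smooth_on_vIm: "open U \<Longrightarrow> smooth_on U f \<Longrightarrow> smooth_on U (\<lambda>w. vIm (f w))"
  using smooth_on_linear[OF _ bounded_linear_vIm] by blast
lemma smooth_on_vec_nth: "open U \<Longrightarrow> smooth_on U f \<Longrightarrow> smooth_on U (\<lambda>w. f w $ k)"
  using smooth_on_linear[OF _ bounded_linear_vec_nth] by blast
lemma smooth_on_of_real: "open U \<Longrightarrow> smooth_on U f \<Longrightarrow> smooth_on U (\<lambda>w. complex_of_real (f w))"
  using smooth_on_linear[OF _ bounded_linear_of_real] by blast
lemma smooth_on_Re: "open U \<Longrightarrow> smooth_on U f \<Longrightarrow> smooth_on U (\<lambda>w. Re (f w))"
  using smooth_on_linear[OF _ bounded_linear_Re] by blast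
lemma smooth_on_Im: "open U \<Longrightarrow> smooth_on U f \<Longrightarrow> smooth_on U (\<lambda>w. Im (f w))"
  using smooth_on_linear[OF _ bounded_linear_Im] by blast
lemma smooth_on_cnj: "open U \<Longrightarrow> smooth_on U f \<Longrightarrow> smooth_on U (\<lambda>w. cnj (f w))"
  using smooth_on_linear[OF _ bounded_linear_cnj] by blast
lemma smooth_on_sum: "open U \<Longrightarrow> (\<And>k. k \<in> K \<Longrightarrow> smooth_on U (f k)) \<Longrightarrow> smooth_on U (\<lambda>w. \<Sum>k\<in>K. f k w)"
proof (induction K rule: infinite_finite_induct)
  case (infinite A) then show ?case by (simp add: smooth_on_const)
next
  case empty then show ?case by (simp add: smooth_on_const)
next
  case (insert x F) then show ?case using smooth_on_add[of U "f x" "\<lambda>w. \<Sum>k\<in>F. f k w"] by simp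
qed

section \<open>Scalar Wirtinger derivatives\<close>

definition dzs :: "(complex \<Rightarrow> complex) \<Rightarrow> complex \<Rightarrow> complex" where
  "dzs f z = (pd1 f z - \<i> * pd2 f z) / 2"
definition dzbs :: "(complex \<Rightarrow> complex) \<Rightarrow> complex \<Rightarrow> complex" where
  "dzbs f z = (pd1 f z + \<i> * pd2 f z) / 2"

lemma pd_add: "f differentiable (at z) \<Longrightarrow> g differentiable (at z) \<Longrightarrow>
  pd1 (\<lambda>w. f w + g w) z = pd1 f z + pd1 g z \<and> pd2 (\<lambda>w. f w + g w) z = pd2 f z + pd2 g z"
  unfolding pd1_eq_dir_deriv pd2_eq_dir_deriv using dir_deriv_add by blast
lemma pd_diff: "f differentiable (at z) \<Longrightarrow> g differentiable (at z) \<Longrightarrow>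
  pd1 (\<lambda>w. f w - g w) z = pd1 f z - pd1 g z \<and> pd2 (\<lambda>w. f w - g w) z = pd2 f z - pd2 g z"
  unfolding pd1_eq_dir_deriv pd2_eq_dir_deriv using dir_deriv_diff by blast
lemma pd_bil: "bounded_bilinear bop \<Longrightarrow> f differentiable (at z) \<Longrightarrow> g differentiable (at z) \<Longrightarrow>
  pd1 (\<lambda>w. bop (f w) (g w)) z = bop (pd1 f z) (g z) + bop (f z) (pd1 g z) \<and>
  pd2 (\<lambda>w. bop (f w) (g w)) z = bop (pd2 f z) (g z) + bop (f z) (pd2 g z)"
  unfolding pd1_eq_dir_deriv pd2_eq_dir_deriv using dir_deriv_bilinear by blast
lemma pd_lin: "bounded_linear L \<Longrightarrow> f differentiable (at z) \<Longrightarrow>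
  pd1 (\<lambda>w. L (f w)) z = L (pd1 f z) \<and> pd2 (\<lambda>w. L (f w)) z = L (pd2 f z)"
  unfolding pd1_eq_dir_deriv pd2_eq_dir_deriv using dir_deriv_linear by blast
lemma pd_const: "pd1 (\<lambda>w. c) z = 0 \<and> pd2 (\<lambda>w. c) z = 0"
  unfolding pd1_eq_dir_deriv pd2_eq_dir_deriv using dir_deriv_const by blast

lemma pdk_add: "f differentiable (at z) \<Longrightarrow> g differentiable (at z) \<Longrightarrow>
  pdk k (\<lambda>w. f w + g w) z = pdk k f z + pdk k g z"
  unfolding pdk_def using pd_add[of f z g] by simp
lemma pdk_bil: "bounded_bilinear bop \<Longrightarrow> f differentiable (at z) \<Longrightarrow> g differentiable (at z) \<Longrightarrow>
  pdk k (\<lambda>w. bop (f w) (g w)) z = bop (pdk k f z) (g z) + bop (f z) (pdk k g z)"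
  unfolding pdk_def using pd_bil[of bop f z g] by simp
lemma pdk_cong: "open U \<Longrightarrow> z \<in> U \<Longrightarrow> (\<And>w. w \<in> U \<Longrightarrow> f w = g w) \<Longrightarrow> pdk k f z = pdk k g z"
  unfolding pdk_def using pd1_cong[of U z f g] pd2_cong[of U z f g] by simp
lemma pdk_const: "pdk k (\<lambda>w. c) z = 0"
  unfolding pdk_def using pd_const[of c z] by simp

lemma dzs_add:
  assumes "f differentiable (at z)" "g differentiable (at z)"
  shows "dzs (\<lambda>w. f w + g w) z = dzs f z + dzs g z"
proof -
  have e: "pd1 (\<lambda>w. f w + g w) z = pd1 f z + pd1 g z"
    "pd2 (\<lambda>w. f w + g w) z = pd2 f z + pd2 g z"
    using pd_add[OF assms] by auto
  show ?thesis unfolding dzs_def e by (simp add: field_simps)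
qed

lemma dzs_mult:
  assumes "f differentiable (at z)" "g differentiable (at z)"
  shows "dzs (\<lambda>w. f w * g w) z = dzs f z * g z + f z * dzs g z"
proof -
  have e: "pd1 (\<lambda>w. f w * g w) z = pd1 f z * g z + f z * pd1 g z"
    "pd2 (\<lambda>w. f w * g w) z = pd2 f z * g z + f z * pd2 g z"
    using pd_bil[OF bounded_bilinear_mult assms] by auto
  show ?thesis unfolding dzs_def e by (simp add: field_simps)
qed

lemma dzs_const:
  shows "dzs (\<lambda>w. c) z = 0"
proof -
  have e: "pd1 (\<lambda>w. c) z = 0"
    "pd2 (\<lambda>w. c) z = 0"
    using pd_const by auto
  show ?thesis unfolding dzs_def e by (simp add: field_simps)
qed

lemma dzbs_add:
  assumes "f differentiable (at z)" "g differentiable (at z)"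
  shows "dzbs (\<lambda>w. f w + g w) z = dzbs f z + dzbs g z"
proof -
  have e: "pd1 (\<lambda>w. f w + g w) z = pd1 f z + pd1 g z"
    "pd2 (\<lambda>w. f w + g w) z = pd2 f z + pd2 g z"
    using pd_add[OF assms] by auto
  show ?thesis unfolding dzbs_def e by (simp add: field_simps)
qed

lemma dzbs_diff:
  assumes "f differentiable (at z)" "g differentiable (at z)"
  shows "dzbs (\<lambda>w. f w - g w) z = dzbs f z - dzbs g z"
proof -
  have e: "pd1 (\<lambda>w. f w - g w) z = pd1 f z - pd1 g z"
    "pd2 (\<lambda>w. f w - g w) z = pd2 f z - pd2 g z"
    using pd_diff[OF assms] by auto
  show ?thesis unfolding dzbs_def e by (simp add: field_simps)
qed

lemma dzbs_mult:
  assumes "f differentiable (at z)" "g differentiable (at z)"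
  shows "dzbs (\<lambda>w. f w * g w) z = dzbs f z * g z + f z * dzbs g z"
proof -
  have e: "pd1 (\<lambda>w. f w * g w) z = pd1 f z * g z + f z * pd1 g z"
    "pd2 (\<lambda>w. f w * g w) z = pd2 f z * g z + f z * pd2 g z"
    using pd_bil[OF bounded_bilinear_mult assms] by auto
  show ?thesis unfolding dzbs_def e by (simp add: field_simps)
qed

lemma dzbs_const:
  shows "dzbs (\<lambda>w. c) z = 0"
proof -
  have e: "pd1 (\<lambda>w. c) z = 0"
    "pd2 (\<lambda>w. c) z = 0"
    using pd_const by auto
  show ?thesis unfolding dzbs_def e by (simp add: field_simps)
qed

lemma dzbs_inverse:
  assumes "f differentiable (at z)" "f z \<noteq> 0"
  shows "dzbs (\<lambda>w. inverse (f w)) z = - dzbs f z / (f z)^2"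
proof -
  have e: "pd1 (\<lambda>w. inverse (f w)) z = - (inverse (f z) * pd1 f z * inverse (f z))"
    "pd2 (\<lambda>w. inverse (f w)) z = - (inverse (f z) * pd2 f z * inverse (f z))"
    using dir_deriv_inverse[OF assms] unfolding pd1_eq_dir_deriv pd2_eq_dir_deriv by auto
  show ?thesis using assms(2) unfolding dzbs_def e by (simp add: field_simps power2_eq_square)
qed

lemma dzs_cnj:
  assumes "f differentiable (at z)"
  shows "dzs (\<lambda>w. cnj (f w)) z = cnj (dzbs f z)"
proof -
  have e: "pd1 (\<lambda>w. cnj (f w)) z = cnj (pd1 f z)"
    "pd2 (\<lambda>w. cnj (f w)) z = cnj (pd2 f z)"
    using pd_lin[OF bounded_linear_cnj assms] by auto
  show ?thesis unfolding dzs_def dzbs_def e by (simp add: field_simps)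
qed

lemma dzbs_cnj:
  assumes "f differentiable (at z)"
  shows "dzbs (\<lambda>w. cnj (f w)) z = cnj (dzs f z)"
proof -
  have e: "pd1 (\<lambda>w. cnj (f w)) z = cnj (pd1 f z)"
    "pd2 (\<lambda>w. cnj (f w)) z = cnj (pd2 f z)"
    using pd_lin[OF bounded_linear_cnj assms] by auto
  show ?thesis unfolding dzs_def dzbs_def e by (simp add: field_simps)
qed

lemma dzs_real_cnj:
  assumes "r differentiable (at z)"
  shows "cnj (dzs (\<lambda>w. complex_of_real (r w)) z) = dzbs (\<lambda>w. complex_of_real (r w)) z"
proof -
  have e: "pd1 (\<lambda>w. complex_of_real (r w)) z = complex_of_real (pd1 r z)"
    "pd2 (\<lambda>w. complex_of_real (r w)) z = complex_of_real (pd2 r z)"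
    using pd_lin[OF bounded_linear_of_real assms] by auto
  show ?thesis unfolding dzs_def dzbs_def e by (simp add: field_simps)
qed

lemma dzs_cmult: "f differentiable (at z) \<Longrightarrow> dzs (\<lambda>w. c * f w) z = c * dzs f z"
  using dzs_mult[OF differentiable_const, of f z c] by (simp add: dzs_const)
lemma dzbs_cmult: "f differentiable (at z) \<Longrightarrow> dzbs (\<lambda>w. c * f w) z = c * dzbs f z"
  using dzbs_mult[OF differentiable_const, of f z c] by (simp add: dzbs_const)

lemma dzs_cong: "open U \<Longrightarrow> z \<in> U \<Longrightarrow> (\<And>w. w \<in> U \<Longrightarrow> f w = g w) \<Longrightarrow> dzs f z = dzs g z"
  unfolding dzs_def using pd1_cong[of U z f g] pd2_cong[of U z f g] by simp
lemma dzbs_cong: "open U \<Longrightarrow> z \<in> U \<Longrightarrow> (\<And>w. w \<in> U \<Longrightarrow> f w = g w) \<Longrightarrow> dzbs f z = dzbs g z"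
  unfolding dzbs_def using pd1_cong[of U z f g] pd2_cong[of U z f g] by simp
lemma dz_cong: "open U \<Longrightarrow> z \<in> U \<Longrightarrow> (\<And>w. w \<in> U \<Longrightarrow> f w = g w) \<Longrightarrow> dz f z = dz g z"
  unfolding dz_def using pd1_cong[of U z f g] pd2_cong[of U z f g] by simp
lemma dzb_cong: "open U \<Longrightarrow> z \<in> U \<Longrightarrow> (\<And>w. w \<in> U \<Longrightarrow> f w = g w) \<Longrightarrow> dzb f z = dzb g z"
  unfolding dzb_def using pd1_cong[of U z f g] pd2_cong[of U z f g] by simp

lemma dz_nth:
  assumes "G differentiable (at z)"
  shows "dz G z $ k = dzs (\<lambda>w. G w $ k) z"
proof -
  have e: "pd1 (\<lambda>w. G w $ k) z = pd1 G z $ k"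
    "pd2 (\<lambda>w. G w $ k) z = pd2 G z $ k"
    using pd_lin[OF bounded_linear_vec_nth assms] by auto
  show ?thesis unfolding dz_def dzs_def e by (simp add: field_simps)
qed

lemma dzb_nth:
  assumes "G differentiable (at z)"
  shows "dzb G z $ k = dzbs (\<lambda>w. G w $ k) z"
proof -
  have e: "pd1 (\<lambda>w. G w $ k) z = pd1 G z $ k"
    "pd2 (\<lambda>w. G w $ k) z = pd2 G z $ k"
    using pd_lin[OF bounded_linear_vec_nth assms] by auto
  show ?thesis unfolding dzb_def dzbs_def e by (simp add: field_simps)
qed

lemma dzs_sum: "(\<And>k. k \<in> K \<Longrightarrow> f k differentiable (at z)) \<Longrightarrow>
   dzs (\<lambda>w. \<Sum>k\<in>K. f k w) z = (\<Sum>k\<in>K. dzs (f k) z)"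
proof (induction K rule: infinite_finite_induct)
  case (infinite A) then show ?case by (simp add: dzs_const)
next
  case empty then show ?case by (simp add: dzs_const)
next
  case (insert x F)
  have "(\<lambda>w. \<Sum>k\<in>F. f k w) differentiable (at z)"
    by (intro differentiable_sum) (use insert in auto)
  then show ?case using insert dzs_add[of "f x" z "\<lambda>w. \<Sum>k\<in>F. f k w"] by simp
qed

lemma dzbs_sum: "(\<And>k. k \<in> K \<Longrightarrow> f k differentiable (at z)) \<Longrightarrow>
   dzbs (\<lambda>w. \<Sum>k\<in>K. f k w) z = (\<Sum>k\<in>K. dzbs (f k) z)"
proof (induction K rule: infinite_finite_induct)
  case (infinite A) then show ?case by (simp add: dzbs_const)
next
  case empty then show ?case by (simp add: dzbs_const)
next
  case (insert x F)
  have "(\<lambda>w. \<Sum>k\<in>F. f k w) differentiable (at z)"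
    by (intro differentiable_sum) (use insert in auto)
  then show ?case using insert dzbs_add[of "f x" z "\<lambda>w. \<Sum>k\<in>F. f k w"] by simp
qed

lemma nth_differentiable: "G differentiable (at z) \<Longrightarrow> (\<lambda>w. G w $ k) differentiable (at z)"
  unfolding differentiable_def using bounded_linear.has_derivative[OF bounded_linear_vec_nth] by blast

lemma cdot_add_left: "cdot (u + v) w = cdot u w + cdot v w"
  unfolding cdot_def by (simp add: distrib_right sum.distrib)
lemma cdot_add_right: "cdot w (u + v) = cdot w u + cdot w v"
  unfolding cdot_def by (simp add: distrib_left sum.distrib)
lemma cdot_diff_left: "cdot (u - v) w = cdot u w - cdot v w"
  unfolding cdot_def by (simp add: left_diff_distrib sum_subtractf)
lemma cdot_diff_right: "cdot w (u - v) = cdot w u - cdot w v"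
  unfolding cdot_def by (simp add: right_diff_distrib sum_subtractf)
lemma cdot_smult_left: "cdot (c *s u) w = c * cdot u w"
  unfolding cdot_def by (simp add: sum_distrib_left mult.assoc)
lemma cdot_smult_right: "cdot w (c *s u) = c * cdot w u"
  unfolding cdot_def by (simp add: sum_distrib_left mult.left_commute)
lemma cdot_commute: "cdot u w = cdot w u"
  unfolding cdot_def by (simp add: mult.commute)
lemma cdot_minus_left: "cdot (- u) w = - cdot u w"
  unfolding cdot_def by (simp add: sum_negf)
lemma cdot_minus_right: "cdot w (- u) = - cdot w u"
  unfolding cdot_def by (simp add: sum_negf)

lemmas cdot_simps = cdot_add_left cdot_add_right cdot_diff_left cdot_diff_right
  cdot_smult_left cdot_smult_right cdot_minus_left cdot_minus_right

lemma cvec_nth [simp]: "cvec a $ i = complex_of_real (a $ i)" unfolding cvec_def by simp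
lemma vcnj_nth [simp]: "vcnj a $ i = cnj (a $ i)" unfolding vcnj_def by simp
lemma vRe_nth [simp]: "vRe a $ i = Re (a $ i)" unfolding vRe_def by simp
lemma vIm_nth [simp]: "vIm a $ i = Im (a $ i)" unfolding vIm_def by simp

lemma cdot_cvec: "cdot (cvec a) (cvec b) = complex_of_real (a \<bullet> b)"
  unfolding cdot_def inner_vec_def by simp
lemma cdot_cvec_right: "cdot v (cvec a) = complex_of_real (vRe v \<bullet> a) + \<i> * complex_of_real (vIm v \<bullet> a)"
  unfolding cdot_def inner_vec_def
  by (simp add: complex_eq_iff Re_sum Im_sum)
lemma cvec_add: "cvec (a + b) = cvec a + cvec b" by (simp add: vec_eq_iff)
lemma cvec_diff: "cvec (a - b) = cvec a - cvec b" by (simp add: vec_eq_iff)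
lemma cvec_scaleR: "cvec (r *\<^sub>R a) = complex_of_real r *s cvec a" by (simp add: vec_eq_iff)
lemma cvec_zero [simp]: "cvec 0 = 0" by (simp add: vec_eq_iff)
lemma vcnj_cvec [simp]: "vcnj (cvec a) = cvec a" by (simp add: vec_eq_iff)
lemma vcnj_vcnj [simp]: "vcnj (vcnj a) = a" by (simp add: vec_eq_iff)
lemma cdot_vcnj: "cdot (vcnj u) (vcnj v) = cnj (cdot u v)"
  unfolding cdot_def by simp
lemma vcnj_smult: "vcnj (c *s v) = cnj c *s vcnj v" by (simp add: vec_eq_iff)
lemma vcnj_add: "vcnj (u + v) = vcnj u + vcnj v" by (simp add: vec_eq_iff)
lemma hnorm2_cdot: "complex_of_real (hnorm2 u) = cdot u (vcnj u)"
proof -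
  have e: "complex_of_real ((cmod x)\<^sup>2) = x * cnj x" for x by (simp add: complex_mult_cnj cmod_power2)
  show ?thesis unfolding hnorm2_def cdot_def of_real_sum e vcnj_nth ..
qed

lemma hnorm2_eq: "hnorm2 u = (\<Sum>i\<in>UNIV. Re (u $ i) * Re (u $ i) + Im (u $ i) * Im (u $ i))"
  unfolding hnorm2_def cmod_power2 by (simp only: power2_eq_square)
lemma Re_cdot_cvec: "Re (cdot (cvec a) v) = a \<bullet> vRe v"
  unfolding cdot_def inner_vec_def by (simp add: Re_sum)
lemma cnj_cdot_cvec: "cnj (cdot (cvec a) v) = cdot (cvec a) (vcnj v)"
  unfolding cdot_def by simp

lemma dzb_add: "G differentiable (at z) \<Longrightarrow> K differentiable (at z) \<Longrightarrow> dzb (\<lambda>w. G w + K w) z = dzb G z + dzb K z"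
  by (simp add: vec_eq_iff dzb_nth dzbs_add nth_differentiable differentiable_add)
lemma dzb_diff: "G differentiable (at z) \<Longrightarrow> K differentiable (at z) \<Longrightarrow> dzb (\<lambda>w. G w - K w) z = dzb G z - dzb K z"
  by (simp add: vec_eq_iff dzb_nth dzbs_diff nth_differentiable differentiable_diff)
lemma dz_smult: "c differentiable (at z) \<Longrightarrow> G differentiable (at z) \<Longrightarrow>
   dz (\<lambda>w. c w *s G w) z = dzs c z *s G z + c z *s dz G z"
proof -
  assume c: "c differentiable (at z)" and G: "G differentiable (at z)"
  have d: "(\<lambda>w. c w *s G w) differentiable (at z)" by (rule bounded_bilinear_differentiable_at[OF bounded_bilinear_vec_smult c G])
  show ?thesis
    by (simp add: vec_eq_iff dz_nth[OF d] dz_nth[OF G] dzs_mult[OF c nth_differentiable[OF G]])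
qed

lemma dzb_smult: "c differentiable (at z) \<Longrightarrow> G differentiable (at z) \<Longrightarrow>
   dzb (\<lambda>w. c w *s G w) z = dzbs c z *s G z + c z *s dzb G z"
proof -
  assume c: "c differentiable (at z)" and G: "G differentiable (at z)"
  have d: "(\<lambda>w. c w *s G w) differentiable (at z)" by (rule bounded_bilinear_differentiable_at[OF bounded_bilinear_vec_smult c G])
  show ?thesis
    by (simp add: vec_eq_iff dzb_nth[OF d] dzb_nth[OF G] dzbs_mult[OF c nth_differentiable[OF G]])
qed

lemma dzs_cdot: "G differentiable (at z) \<Longrightarrow> K differentiable (at z) \<Longrightarrow>
   dzs (\<lambda>w. cdot (G w) (K w)) z = cdot (dz G z) (K z) + cdot (G z) (dz K z)"
proof -
  assume G: "G differentiable (at z)" and K: "K differentiable (at z)"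
  have "dzs (\<lambda>w. cdot (G w) (K w)) z = (\<Sum>k\<in>UNIV. dzs (\<lambda>w. G w $ k * K w $ k) z)"
    unfolding cdot_def
    by (rule dzs_sum) (intro differentiable_mult nth_differentiable G K)
  also have "\<dots> = (\<Sum>k\<in>UNIV. dz G z $ k * K z $ k + G z $ k * dz K z $ k)"
    by (simp add: dzs_mult nth_differentiable G K dz_nth)
  finally show ?thesis unfolding cdot_def by (simp add: sum.distrib)
qed

lemma dzbs_cdot: "G differentiable (at z) \<Longrightarrow> K differentiable (at z) \<Longrightarrow>
   dzbs (\<lambda>w. cdot (G w) (K w)) z = cdot (dzb G z) (K z) + cdot (G z) (dzb K z)"
proof -
  assume G: "G differentiable (at z)" and K: "K differentiable (at z)"
  have "dzbs (\<lambda>w. cdot (G w) (K w)) z = (\<Sum>k\<in>UNIV. dzbs (\<lambda>w. G w $ k * K w $ k) z)"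
    unfolding cdot_def
    by (rule dzbs_sum) (intro differentiable_mult nth_differentiable G K)
  also have "\<dots> = (\<Sum>k\<in>UNIV. dzb G z $ k * K z $ k + G z $ k * dzb K z $ k)"
    by (simp add: dzbs_mult nth_differentiable G K dzb_nth)
  finally show ?thesis unfolding cdot_def by (simp add: sum.distrib)
qed

lemma dzbs_nth_mult: "u differentiable (at z) \<Longrightarrow> v differentiable (at z) \<Longrightarrow>
   dzbs (\<lambda>w. u w $ i * v w $ j) z = dzb u z $ i * v z $ j + u z $ i * dzb v z $ j"
  by (simp add: dzbs_mult nth_differentiable dzb_nth)

lemma dzb_vcnj: "G differentiable (at z) \<Longrightarrow> dzb (\<lambda>w. vcnj (G w)) z = vcnj (dz G z)"
proof -
  assume G: "G differentiable (at z)"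
  have d: "(\<lambda>w. vcnj (G w)) differentiable (at z)" by (rule bounded_linear_differentiable_at[OF bounded_linear_vcnj G])
  have "(\<lambda>w. vcnj (G w) $ k) = (\<lambda>w. cnj (G w $ k))" for k by simp
  then show ?thesis
    by (simp add: vec_eq_iff dzb_nth[OF d] dz_nth[OF G] dzbs_cnj[OF nth_differentiable[OF G]])
qed

lemma pd_dz:
  assumes "G differentiable (at z)" "pd1 G differentiable (at z)" "pd2 G differentiable (at z)"
  shows "pd1 (dz G) z = (1/2) *s (pd1 (pd1 G) z - \<i> *s pd1 (pd2 G) z)"
    "pd2 (dz G) z = (1/2) *s (pd2 (pd1 G) z - \<i> *s pd2 (pd2 G) z)"
proof -
  have e: "dz G = (\<lambda>w. (1/2) *s (pd1 G w - \<i> *s pd2 G w))" unfolding dz_def[abs_def] ..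
  have d2: "(\<lambda>w. \<i> *s pd2 G w) differentiable (at z)" by (rule bounded_linear_differentiable_at[OF bounded_linear_vec_smult_const assms(3)])
  have d: "(\<lambda>w. pd1 G w - \<i> *s pd2 G w) differentiable (at z)" using assms(2) d2 by (rule differentiable_diff)
  have a1: "pd1 (\<lambda>w. (1/2) *s (pd1 G w - \<i> *s pd2 G w)) z = (1/2) *s pd1 (\<lambda>w. pd1 G w - \<i> *s pd2 G w) z"
    and a2: "pd2 (\<lambda>w. (1/2) *s (pd1 G w - \<i> *s pd2 G w)) z = (1/2) *s pd2 (\<lambda>w. pd1 G w - \<i> *s pd2 G w) z"
    using pd_lin[OF bounded_linear_vec_smult_const d] by blast+
  have b1: "pd1 (\<lambda>w. pd1 G w - \<i> *s pd2 G w) z = pd1 (pd1 G) z - pd1 (\<lambda>w. \<i> *s pd2 G w) z"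
    and b2: "pd2 (\<lambda>w. pd1 G w - \<i> *s pd2 G w) z = pd2 (pd1 G) z - pd2 (\<lambda>w. \<i> *s pd2 G w) z"
    using pd_diff[OF assms(2) d2] by blast+
  have c1: "pd1 (\<lambda>w. \<i> *s pd2 G w) z = \<i> *s pd1 (pd2 G) z"
    and c2: "pd2 (\<lambda>w. \<i> *s pd2 G w) z = \<i> *s pd2 (pd2 G) z"
    using pd_lin[OF bounded_linear_vec_smult_const assms(3)] by blast+
  show "pd1 (dz G) z = (1/2) *s (pd1 (pd1 G) z - \<i> *s pd1 (pd2 G) z)"
    unfolding e a1 b1 c1 ..
  show "pd2 (dz G) z = (1/2) *s (pd2 (pd1 G) z - \<i> *s pd2 (pd2 G) z)"
    unfolding e a2 b2 c2 ..
qed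

lemma pd_dzb:
  assumes "G differentiable (at z)" "pd1 G differentiable (at z)" "pd2 G differentiable (at z)"
  shows "pd1 (dzb G) z = (1/2) *s (pd1 (pd1 G) z + \<i> *s pd1 (pd2 G) z)"
    "pd2 (dzb G) z = (1/2) *s (pd2 (pd1 G) z + \<i> *s pd2 (pd2 G) z)"
proof -
  have e: "dzb G = (\<lambda>w. (1/2) *s (pd1 G w + \<i> *s pd2 G w))" unfolding dzb_def[abs_def] ..
  have d2: "(\<lambda>w. \<i> *s pd2 G w) differentiable (at z)" by (rule bounded_linear_differentiable_at[OF bounded_linear_vec_smult_const assms(3)])
  have d: "(\<lambda>w. pd1 G w + \<i> *s pd2 G w) differentiable (at z)" using assms(2) d2 by (rule differentiable_add)
  have a1: "pd1 (\<lambda>w. (1/2) *s (pd1 G w + \<i> *s pd2 G w)) z = (1/2) *s pd1 (\<lambda>w. pd1 G w + \<i> *s pd2 G w) z"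
    and a2: "pd2 (\<lambda>w. (1/2) *s (pd1 G w + \<i> *s pd2 G w)) z = (1/2) *s pd2 (\<lambda>w. pd1 G w + \<i> *s pd2 G w) z"
    using pd_lin[OF bounded_linear_vec_smult_const d] by blast+
  have b1: "pd1 (\<lambda>w. pd1 G w + \<i> *s pd2 G w) z = pd1 (pd1 G) z + pd1 (\<lambda>w. \<i> *s pd2 G w) z"
    and b2: "pd2 (\<lambda>w. pd1 G w + \<i> *s pd2 G w) z = pd2 (pd1 G) z + pd2 (\<lambda>w. \<i> *s pd2 G w) z"
    using pd_add[OF assms(2) d2] by blast+
  have c1: "pd1 (\<lambda>w. \<i> *s pd2 G w) z = \<i> *s pd1 (pd2 G) z"
    and c2: "pd2 (\<lambda>w. \<i> *s pd2 G w) z = \<i> *s pd2 (pd2 G) z"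
    using pd_lin[OF bounded_linear_vec_smult_const assms(3)] by blast+
  show "pd1 (dzb G) z = (1/2) *s (pd1 (pd1 G) z + \<i> *s pd1 (pd2 G) z)"
    unfolding e a1 b1 c1 ..
  show "pd2 (dzb G) z = (1/2) *s (pd2 (pd1 G) z + \<i> *s pd2 (pd2 G) z)"
    unfolding e a2 b2 c2 ..
qed

lemma dzb_dz_lap:
  assumes U: "open U" and G: "smooth_on U (G :: complex \<Rightarrow> complex^'n)" and z: "z \<in> U"
  shows "dzb (dz G) z = (1/4) *s (pd1 (pd1 G) z + pd2 (pd2 G) z)"
    and "dz (dzb G) z = (1/4) *s (pd1 (pd1 G) z + pd2 (pd2 G) z)"
proof -
  have d: "G differentiable (at z)" "pd1 G differentiable (at z)" "pd2 G differentiable (at z)"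
    using smooth_on_differentiable_at[OF U _ z] G smooth_on_pd1 smooth_on_pd2 by blast+
  have s: "pd1 (pd2 G) z = pd2 (pd1 G) z" by (rule pd_commute[OF U smooth_on_imp_C2[OF G] z])
  show "dzb (dz G) z = (1/4) *s (pd1 (pd1 G) z + pd2 (pd2 G) z)"
    unfolding dzb_def[of "dz G"] pd_dz[OF d] s by (simp add: vec_eq_iff field_simps)
  show "dz (dzb G) z = (1/4) *s (pd1 (pd1 G) z + pd2 (pd2 G) z)"
    unfolding dz_def[of "dzb G"] pd_dzb[OF d] s by (simp add: vec_eq_iff field_simps)
qed

lemma dz_dz_eq:
  assumes U: "open U" and G: "smooth_on U (G :: complex \<Rightarrow> complex^'n)" and z: "z \<in> U"
  shows "dz (dz G) z = (1/4) *s (pd1 (pd1 G) z - pd2 (pd2 G) z - \<i> *s (pd1 (pd2 G) z + pd2 (pd1 G) z))"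
proof -
  have d: "G differentiable (at z)" "pd1 G differentiable (at z)" "pd2 G differentiable (at z)"
    using smooth_on_differentiable_at[OF U _ z] G smooth_on_pd1 smooth_on_pd2 by blast+
  show ?thesis
    unfolding dz_def[of "dz G"] pd_dz[OF d] by (simp add: vec_eq_iff field_simps)
qed

lemma dzb_const_smult: "G differentiable (at z) \<Longrightarrow> dzb (\<lambda>w. c *s G w) z = c *s dzb G z"
proof -
  assume G: "G differentiable (at z)"
  have "dzb (\<lambda>w. c *s G w) z = dzbs (\<lambda>w. c) z *s G z + c *s dzb G z"
    by (rule dzb_smult[OF differentiable_const G])
  then show ?thesis unfolding dzbs_const by simp
qed

lemma smooth_on_dz: "open U \<Longrightarrow> smooth_on U G \<Longrightarrow> smooth_on U (dz G)"
proof -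
  assume U: "open U" and G: "smooth_on U G"
  have "smooth_on U (\<lambda>w. (1/2) *s (pd1 G w - \<i> *s pd2 G w))"
    by (intro smooth_on_vec_smult smooth_on_diff smooth_on_const smooth_on_pd1 smooth_on_pd2 U G)
  then show ?thesis unfolding dz_def[abs_def] .
qed

lemma smooth_on_dzb: "open U \<Longrightarrow> smooth_on U G \<Longrightarrow> smooth_on U (dzb G)"
proof -
  assume U: "open U" and G: "smooth_on U G"
  have "smooth_on U (\<lambda>w. (1/2) *s (pd1 G w + \<i> *s pd2 G w))"
    by (intro smooth_on_vec_smult smooth_on_add smooth_on_const smooth_on_pd1 smooth_on_pd2 U G)
  then show ?thesis unfolding dzb_def[abs_def] .
qed

lemma smooth_on_dzs: "open U \<Longrightarrow> smooth_on U f \<Longrightarrow> smooth_on U (dzs f)"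
proof -
  assume U: "open U" and f: "smooth_on U f"
  have "smooth_on U (\<lambda>w. (pd1 f w - \<i> * pd2 f w) * inverse 2)"
    by (intro smooth_on_mult smooth_on_diff smooth_on_const smooth_on_pd1 smooth_on_pd2 U f)
  then show ?thesis unfolding dzs_def[abs_def] divide_inverse .
qed

lemma closed_form_on_vIm_vRe:
  assumes f: "\<And>z. z \<in> U \<Longrightarrow> (f :: complex \<Rightarrow> complex^'n) differentiable (at z)" and h: "\<And>z. z \<in> U \<Longrightarrow> vRe (dzb f z) = 0"
  shows "closed_form_on U (\<lambda>z. vIm (f z)) (\<lambda>z. vRe (f z))"
  unfolding closed_form_on_def
proof (intro ballI conjI)
  fix z assume z: "z \<in> U"
  have d: "f differentiable (at z)" by (rule f[OF z])
  show "(\<lambda>z. vIm (f z)) differentiable (at z)" by (rule bounded_linear_differentiable_at[OF bounded_linear_vIm d])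
  show "(\<lambda>z. vRe (f z)) differentiable (at z)" by (rule bounded_linear_differentiable_at[OF bounded_linear_vRe d])
  have a: "pd1 (\<lambda>z. vRe (f z)) z = vRe (pd1 f z)" using pd_lin[OF bounded_linear_vRe d] by blast
  have b: "pd2 (\<lambda>z. vIm (f z)) z = vIm (pd2 f z)" using pd_lin[OF bounded_linear_vIm d] by blast
  have "vRe (dzb f z) = 0" by (rule h[OF z])
  then show "pd1 (\<lambda>z. vRe (f z)) z = pd2 (\<lambda>z. vIm (f z)) z"
    unfolding a b dzb_def by (simp add: vec_eq_iff)
qed

lemma closed_form_on_Im_Re:
  assumes f: "\<And>z. z \<in> U \<Longrightarrow> (f :: complex \<Rightarrow> complex) differentiable (at z)" and h: "\<And>z. z \<in> U \<Longrightarrow> Re (dzbs f z) = 0"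
  shows "closed_form_on U (\<lambda>z. Im (f z)) (\<lambda>z. Re (f z))"
  unfolding closed_form_on_def
proof (intro ballI conjI)
  fix z assume z: "z \<in> U"
  have d: "f differentiable (at z)" by (rule f[OF z])
  show "(\<lambda>z. Im (f z)) differentiable (at z)" by (rule bounded_linear_differentiable_at[OF bounded_linear_Im d])
  show "(\<lambda>z. Re (f z)) differentiable (at z)" by (rule bounded_linear_differentiable_at[OF bounded_linear_Re d])
  have a: "pd1 (\<lambda>z. Re (f z)) z = Re (pd1 f z)" using pd_lin[OF bounded_linear_Re d] by blast
  have b: "pd2 (\<lambda>z. Im (f z)) z = Im (pd2 f z)" using pd_lin[OF bounded_linear_Im d] by blast
  have "Re (dzbs f z) = 0" by (rule h[OF z])
  then show "pd1 (\<lambda>z. Re (f z)) z = pd2 (\<lambda>z. Im (f z)) z"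
    unfolding a b dzbs_def by simp
qed

lemma closed_form_on_mIm_mRe:
  assumes f: "\<And>z. z \<in> U \<Longrightarrow> (f :: complex \<Rightarrow> complex^'n^'m) differentiable (at z)"
    and h: "\<And>z i j. z \<in> U \<Longrightarrow> Re (dzbs (\<lambda>w. f w $ i $ j) z) = 0"
  shows "closed_form_on U (\<lambda>z. mIm (f z)) (\<lambda>z. mRe (f z))"
  unfolding closed_form_on_def
proof (intro ballI conjI)
  fix z assume z: "z \<in> U"
  have d: "f differentiable (at z)" by (rule f[OF z])
  show "(\<lambda>z. mIm (f z)) differentiable (at z)" by (rule bounded_linear_differentiable_at[OF bounded_linear_mIm d])
  show "(\<lambda>z. mRe (f z)) differentiable (at z)" by (rule bounded_linear_differentiable_at[OF bounded_linear_mRe d])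
  have a: "pd1 (\<lambda>z. mRe (f z)) z = mRe (pd1 f z)" using pd_lin[OF bounded_linear_mRe d] by blast
  have b: "pd2 (\<lambda>z. mIm (f z)) z = mIm (pd2 f z)" using pd_lin[OF bounded_linear_mIm d] by blast
  have dij: "(\<lambda>w. f w $ i $ j) differentiable (at z)" for i j
    by (rule nth_differentiable, rule nth_differentiable[OF d])
  have c: "pd1 (\<lambda>w. f w $ i $ j) z = pd1 f z $ i $ j \<and> pd2 (\<lambda>w. f w $ i $ j) z = pd2 f z $ i $ j" for i j
  proof -
    have bl: "bounded_linear (\<lambda>M::complex^'n^'m. M $ i $ j)"
      by (rule bounded_linear_compose[OF bounded_linear_vec_nth[of j] bounded_linear_vec_nth[of i]])
    show ?thesis using pd_lin[OF bl d] by blast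
  qed
  show "pd1 (\<lambda>z. mRe (f z)) z = pd2 (\<lambda>z. mIm (f z)) z"
    unfolding a b
  proof (simp add: vec_eq_iff mRe_def mIm_def, intro allI)
    fix i j
    have "Re (dzbs (\<lambda>w. f w $ i $ j) z) = 0" by (rule h[OF z])
    then show "Re (pd1 f z $ i $ j) = Im (pd2 f z $ i $ j)" using c[of i j] unfolding dzbs_def by simp
  qed
qed

lemma tproj_add: "tproj \<Phi> w (a + b) = tproj \<Phi> w a + tproj \<Phi> w b"
  unfolding tproj_def by (simp add: inner_add_left algebra_simps)
lemma tproj_diff: "tproj \<Phi> w (x - y) = tproj \<Phi> w x - tproj \<Phi> w y"
  unfolding tproj_def by (simp add: inner_diff_left algebra_simps)
lemma tproj_scale: "tproj \<Phi> w (r *\<^sub>R x) = r *\<^sub>R tproj \<Phi> w x"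
  unfolding tproj_def by (simp add: algebra_simps)
lemma tproj_zero: "tproj \<Phi> w 0 = 0" unfolding tproj_def by simp
lemma nproj_add: "nproj \<Phi> w (a + b) = nproj \<Phi> w a + nproj \<Phi> w b"
  unfolding nproj_def tproj_add by simp
lemma nproj_diff: "nproj \<Phi> w (x - y) = nproj \<Phi> w x - nproj \<Phi> w y"
  unfolding nproj_def tproj_diff by simp
lemma nproj_scale: "nproj \<Phi> w (r *\<^sub>R x) = r *\<^sub>R nproj \<Phi> w x"
  unfolding nproj_def tproj_scale by (simp add: algebra_simps)
lemma cN_eq_diff_cT: "cN \<Phi> w v = v - cT \<Phi> w v"
  unfolding cN_def cT_def nproj_def by (simp add: vec_eq_iff complex_eq_iff)
lemma cvec_nproj: "cvec (nproj \<Phi> w x) = cN \<Phi> w (cvec x)"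
proof -
  have "vRe (cvec x) = x" "vIm (cvec x) = 0" by (simp_all add: vec_eq_iff)
  then show ?thesis unfolding cN_def nproj_def by (simp add: tproj_zero)
qed

lemma cT_cvec: "cT \<Phi> w (cvec x) = cvec (tproj \<Phi> w x)"
proof -
  have "vRe (cvec x) = x" "vIm (cvec x) = 0" by (simp_all add: vec_eq_iff)
  then show ?thesis unfolding cT_def by (simp add: tproj_zero)
qed

lemma cN_cvec_complex: "cN \<Phi> w (cvec A + \<i> *s cvec B) = cvec (nproj \<Phi> w A) + \<i> *s cvec (nproj \<Phi> w B)"
proof -
  have "vRe (cvec A + \<i> *s cvec B) = A" "vIm (cvec A + \<i> *s cvec B) = B" by (simp_all add: vec_eq_iff)
  then show ?thesis unfolding cN_def by simp
qed

lemma simons_sum_identity: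
  fixes h a c :: "real^'n" and r :: real
  assumes r: "r \<noteq> 0"
  shows "(1 / r\<^sup>2 * ((r *\<^sub>R h + a) \<bullet> h)) *\<^sub>R (r *\<^sub>R h + a) + (1 / r\<^sup>2 * (c \<bullet> h)) *\<^sub>R c
       + ((1 / r\<^sup>2 * (c \<bullet> h)) *\<^sub>R c + (1 / r\<^sup>2 * ((r *\<^sub>R h - a) \<bullet> h)) *\<^sub>R (r *\<^sub>R h - a))
     = (2 * (h \<bullet> h)) *\<^sub>R h + (2 / r\<^sup>2) *\<^sub>R ((h \<bullet> a) *\<^sub>R a + (h \<bullet> c) *\<^sub>R c)"
proof -
  have e1: "(r *\<^sub>R h + a) \<bullet> h = r * (h \<bullet> h) + h \<bullet> a" by (simp add: inner_add_left inner_commute[of a h])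
  have e2: "(r *\<^sub>R h - a) \<bullet> h = r * (h \<bullet> h) - h \<bullet> a" by (simp add: inner_diff_left inner_commute[of a h])
  have e3: "c \<bullet> h = h \<bullet> c" by (simp add: inner_commute)
  show ?thesis unfolding e1 e2 e3
    using r by (simp add: vec_eq_iff field_simps power2_eq_square)
qed

section \<open>A conformal immersion in a chart\<close>

locale conformal_chart =
  fixes U :: "complex set" and \<Phi> :: "complex \<Rightarrow> real^'n"
  assumes U: "open U" and smooth: "smooth_on U \<Phi>" and conformal: "conformal_immersion_on U \<Phi>"
begin

text \<open>Notation: \<open>p\<close> and \<open>q = cnj p\<close> are \<open>d_z Phi\<close> and \<open>d_zbar Phi\<close>, \<open>\<rho>\<close> is the
  conformal factor \<open>e^(2 lambda)\<close> and \<open>rc\<close> the same number in \<open>\<complex>\<close>; \<open>hr\<close> is \<open>H\<close>,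
  \<open>h0 dz^2\<close> is \<open>h_0\<close> and \<open>om dz\<close> is \<open>\<omega>\<close>; \<open>F\<close> and \<open>hc\<close> are \<open>\<Phi>\<close> and \<open>H\<close> complexified.\<close>

abbreviation "P1 \<equiv> pd1 \<Phi>"
abbreviation "P2 \<equiv> pd2 \<Phi>"
abbreviation "F \<equiv> \<lambda>w. cvec (\<Phi> w)"
abbreviation "p \<equiv> Pz \<Phi>"
abbreviation "q \<equiv> Pzb \<Phi>"
abbreviation "\<rho> \<equiv> e2l \<Phi>"
abbreviation "rc \<equiv> \<lambda>w. complex_of_real (e2l \<Phi> w)"
abbreviation "hr \<equiv> meanH \<Phi>"
abbreviation "hc \<equiv> \<lambda>w. cvec (meanH \<Phi> w)"
abbreviation "h0 \<equiv> h0c \<Phi>"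
abbreviation "om \<equiv> omegac \<Phi>"
abbreviation "HH \<equiv> \<lambda>w. cdot (hc w) (hc w)"
abbreviation "Hh0 \<equiv> \<lambda>w. cdot (hc w) (h0 w)"
abbreviation "FF \<equiv> \<lambda>w. cdot (F w) (F w)"

lemma conformal_frame: "w \<in> U \<Longrightarrow> P1 w \<bullet> P2 w = 0 \<and> P1 w \<bullet> P1 w = P2 w \<bullet> P2 w \<and> P1 w \<noteq> 0"
  using conformal unfolding conformal_immersion_on_def by (simp add: dot_square_norm)

lemma rho_eq: "w \<in> U \<Longrightarrow> \<rho> w = P1 w \<bullet> P1 w"
  using conformal_frame unfolding e2l_def by simp
lemma rho_pos: "w \<in> U \<Longrightarrow> \<rho> w > 0"
proof -
  assume w: "w \<in> U"
  have "P1 w \<noteq> 0" using conformal_frame[OF w] by blast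
  then show ?thesis unfolding rho_eq[OF w] by simp
qed

lemma rc_nonzero: "w \<in> U \<Longrightarrow> rc w \<noteq> 0"
  using rho_pos by force

lemma pd_F: "w \<in> U \<Longrightarrow> pd1 F w = cvec (P1 w) \<and> pd2 F w = cvec (P2 w)"
  using pd_lin[OF bounded_linear_cvec smooth_on_differentiable_at[OF U smooth]] by blast

lemma p_eq: "w \<in> U \<Longrightarrow> p w = (1/2) *s (cvec (P1 w) - \<i> *s cvec (P2 w))"
  unfolding Pz_def dz_def using pd_F by simp
lemma q_eq: "w \<in> U \<Longrightarrow> q w = (1/2) *s (cvec (P1 w) + \<i> *s cvec (P2 w))"
  unfolding Pzb_def dzb_def using pd_F by simp
lemma q_eq_vcnj_p: "w \<in> U \<Longrightarrow> q w = vcnj (p w)"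
  using p_eq q_eq by (simp add: vec_eq_iff)

lemma cdot_pp: "w \<in> U \<Longrightarrow> cdot (p w) (p w) = 0"
proof -
  assume w: "w \<in> U"
  have "cdot (p w) (p w) = (1/4) * (complex_of_real (P1 w \<bullet> P1 w) - complex_of_real (P2 w \<bullet> P2 w)
      - 2 * \<i> * complex_of_real (P1 w \<bullet> P2 w))"
    unfolding p_eq[OF w] by (simp add: cdot_simps cdot_cvec inner_commute algebra_simps)
  then show ?thesis using conformal_frame[OF w] by simp
qed

lemma cdot_qq: "w \<in> U \<Longrightarrow> cdot (q w) (q w) = 0"
proof -
  assume w: "w \<in> U"
  have "cdot (q w) (q w) = (1/4) * (complex_of_real (P1 w \<bullet> P1 w) - complex_of_real (P2 w \<bullet> P2 w)
      + 2 * \<i> * complex_of_real (P1 w \<bullet> P2 w))"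
    unfolding q_eq[OF w] by (simp add: cdot_simps cdot_cvec inner_commute algebra_simps)
  then show ?thesis using conformal_frame[OF w] by simp
qed

lemma cdot_pq: "w \<in> U \<Longrightarrow> cdot (p w) (q w) = rc w / 2"
proof -
  assume w: "w \<in> U"
  have "cdot (p w) (q w) = (1/4) * (complex_of_real (P1 w \<bullet> P1 w) + complex_of_real (P2 w \<bullet> P2 w)
      + \<i> * complex_of_real (P1 w \<bullet> P2 w) - \<i> * complex_of_real (P2 w \<bullet> P1 w))"
    unfolding q_eq[OF w] p_eq[OF w] by (simp add: cdot_simps cdot_cvec algebra_simps)
  then show ?thesis using conformal_frame[OF w] unfolding e2l_def by (simp add: inner_commute)
qed

lemma cT_eq_frame: "w \<in> U \<Longrightarrow> cT \<Phi> w v = (2 / rc w) *s (cdot v (q w) *s p w + cdot v (p w) *s q w)"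
proof -
  assume w: "w \<in> U"
  have r: "rc w \<noteq> 0" using rc_nonzero[OF w] .
  show ?thesis
    unfolding cT_def tproj_def q_eq[OF w] p_eq[OF w]
    apply (simp add: vec_eq_iff cdot_simps cdot_cvec_right cvec_add cvec_scaleR)
    using r by (simp add: field_simps complex_eq_iff)
qed

lemma cdot_cT_p: "w \<in> U \<Longrightarrow> cdot (cT \<Phi> w v) (p w) = cdot v (p w)"
  using rc_nonzero[of w] by (simp add: cT_eq_frame cdot_simps cdot_pp cdot_qq cdot_pq cdot_commute[of "q w" "p w"])
lemma cdot_cT_q: "w \<in> U \<Longrightarrow> cdot (cT \<Phi> w v) (q w) = cdot v (q w)"
  using rc_nonzero[of w] by (simp add: cT_eq_frame cdot_simps cdot_pp cdot_qq cdot_pq)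
lemma cdot_cN_p: "w \<in> U \<Longrightarrow> cdot (cN \<Phi> w v) (p w) = 0"
  by (simp add: cN_eq_diff_cT cdot_simps cdot_cT_p)
lemma cdot_cN_q: "w \<in> U \<Longrightarrow> cdot (cN \<Phi> w v) (q w) = 0"
  by (simp add: cN_eq_diff_cT cdot_simps cdot_cT_q)
lemma cT_eq_0_if_normal: "w \<in> U \<Longrightarrow> cdot v (p w) = 0 \<Longrightarrow> cdot v (q w) = 0 \<Longrightarrow> cT \<Phi> w v = 0"
  by (simp add: cT_eq_frame)

lemma smooth_P1: "smooth_on U P1" using smooth_on_pd1[OF smooth] .
lemma smooth_P2: "smooth_on U P2" using smooth_on_pd2[OF smooth] .
lemma smooth_F: "smooth_on U F" using smooth_on_cvec[OF U smooth] .
lemma smooth_p: "smooth_on U p" unfolding Pz_def using smooth_on_dz[OF U smooth_F] .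
lemma smooth_q: "smooth_on U q" unfolding Pzb_def using smooth_on_dzb[OF U smooth_F] .
lemma smooth_rho: "smooth_on U \<rho>"
proof -
  have "smooth_on U (\<lambda>w. (P1 w \<bullet> P1 w + P2 w \<bullet> P2 w) / 2)"
    unfolding divide_inverse
    by (intro smooth_on_mult smooth_on_add smooth_on_inner smooth_P1 smooth_P2 smooth_on_const U)
  then show ?thesis unfolding e2l_def[abs_def] .
qed

lemma smooth_rc: "smooth_on U rc" using smooth_on_of_real[OF U smooth_rho] .

lemma smooth_tproj: "smooth_on U V \<Longrightarrow> smooth_on U (\<lambda>w. tproj \<Phi> w (V w))"
proof -
  assume V: "smooth_on U V"
  have nz: "\<And>w. w \<in> U \<Longrightarrow> \<rho> w \<noteq> 0" using rho_pos by (metis order_less_irrefl)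
  have i: "smooth_on U (\<lambda>w. inverse (\<rho> w))" by (rule smooth_on_inverse[OF U nz smooth_rho])
  have "smooth_on U (\<lambda>w. inverse (\<rho> w) *\<^sub>R ((V w \<bullet> P1 w) *\<^sub>R P1 w + (V w \<bullet> P2 w) *\<^sub>R P2 w))"
    by (intro smooth_on_scaleR smooth_on_add smooth_on_inner smooth_P1 smooth_P2 V i U)
  then show ?thesis unfolding tproj_def by (simp add: divide_inverse)
qed

lemma smooth_nproj: "smooth_on U V \<Longrightarrow> smooth_on U (\<lambda>w. nproj \<Phi> w (V w))"
  unfolding nproj_def by (intro smooth_on_diff smooth_tproj U)
lemma smooth_cT: "smooth_on U V \<Longrightarrow> smooth_on U (\<lambda>w. cT \<Phi> w (V w))"
  unfolding cT_def by (intro smooth_on_add smooth_on_cvec smooth_on_vec_smult smooth_on_const smooth_tproj smooth_on_vRe smooth_on_vIm U)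
lemma smooth_cN: "smooth_on U V \<Longrightarrow> smooth_on U (\<lambda>w. cN \<Phi> w (V w))"
  unfolding cN_def by (intro smooth_on_add smooth_on_cvec smooth_on_vec_smult smooth_on_const smooth_nproj smooth_on_vRe smooth_on_vIm U)

lemma smooth_IIc: "smooth_on U (IIc \<Phi> i j)"
  unfolding IIc_def[abs_def] by (intro smooth_nproj smooth_on_pdk smooth)
lemma smooth_inverse_rho: "smooth_on U (\<lambda>w. 1 / \<rho> w)"
proof -
  have nz: "\<And>w. w \<in> U \<Longrightarrow> \<rho> w \<noteq> 0" using rho_pos by (metis order_less_irrefl)
  show ?thesis using smooth_on_inverse[OF U nz smooth_rho] by (simp add: divide_inverse)
qed

lemma smooth_of_real_inverse_rho: "smooth_on U (\<lambda>w. complex_of_real (1 / \<rho> w))"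
  using smooth_on_of_real[OF U smooth_inverse_rho] .
lemma smooth_hr: "smooth_on U hr"
proof -
  have m: "smooth_on U (\<lambda>w. 2 * \<rho> w)" by (rule smooth_on_mult[OF U smooth_on_const smooth_rho])
  have nz: "\<And>w. w \<in> U \<Longrightarrow> 2 * \<rho> w \<noteq> 0" using rho_pos by (metis mult_eq_0_iff order_less_irrefl zero_neq_numeral)
  have i: "smooth_on U (\<lambda>w. inverse (2 * \<rho> w))" by (rule smooth_on_inverse[OF U nz m])
  have "smooth_on U (\<lambda>w. inverse (2 * \<rho> w) *\<^sub>R (IIc \<Phi> 1 1 w + IIc \<Phi> 2 2 w))"
    by (intro smooth_on_scaleR smooth_on_add smooth_IIc i U)
  then show ?thesis by (simp only: meanH_def[abs_def] divide_inverse mult_1_left)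
qed

lemma smooth_hc: "smooth_on U hc" using smooth_on_cvec[OF U smooth_hr] .
lemma smooth_h0: "smooth_on U h0"
  unfolding h0c_def[abs_def] by (intro smooth_on_vec_smult smooth_on_const smooth_cN smooth_on_dz smooth_p U)
lemma smooth_on_hnorm2: "smooth_on U V \<Longrightarrow> smooth_on U (\<lambda>w. hnorm2 (V w))"
  unfolding hnorm2_eq by (intro smooth_on_sum smooth_on_add smooth_on_mult smooth_on_Re smooth_on_Im smooth_on_vec_nth U) auto
lemma smooth_wp2: "smooth_on U (wp2 \<Phi>)"
  unfolding wp2_def[abs_def] by (intro smooth_on_hnorm2 smooth_on_vec_smult smooth_of_real_inverse_rho smooth_h0 U)
lemma smooth_om: "smooth_on U om"
  unfolding omegac_def[abs_def]
  by (intro smooth_on_diff smooth_on_vec_smult smooth_of_real_inverse_rho smooth_cN smooth_cT smooth_on_dzb smooth_h0 smooth_on_of_real smooth_wp2 smooth_p U)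
lemma smooth_norm2: "smooth_on U (\<lambda>w. (norm (\<Phi> w))\<^sup>2)"
  unfolding power2_norm_eq_inner by (intro smooth_on_inner smooth U)
lemma smooth_on_dzb_real: "smooth_on U f \<Longrightarrow> smooth_on U (dzb_real f)"
  unfolding dzb_real_def[abs_def] divide_inverse
  by (intro smooth_on_mult smooth_on_add smooth_on_of_real smooth_on_pd1 smooth_on_pd2 smooth_on_const U)
lemma smooth_form_rot: "smooth_on U (form_rot \<Phi>)"
  unfolding form_rot_def[abs_def]
  by (intro smooth_on_add smooth_on_cwedge smooth_on_scaleR smooth_inverse_rho smooth_h0 smooth_q smooth_F smooth_om U)
lemma smooth_form_dil: "smooth_on U (form_dil \<Phi>)"
  unfolding form_dil_def[abs_def] by (intro smooth_on_cdot smooth_F smooth_om U)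
lemma smooth_form_inv: "smooth_on U (form_inv \<Phi>)"
  unfolding form_inv_def[abs_def] invI_def
  by (intro smooth_on_diff smooth_on_vec_smult smooth_on_of_real smooth_norm2 smooth_om smooth_on_mult smooth_on_const smooth_on_cdot smooth_F smooth_of_real_inverse_rho
       smooth_on_dzb_real smooth_h0 smooth_q U)

lemma smooth_inverse_rc: "smooth_on U (\<lambda>w. inverse (rc w))"
  by (rule smooth_on_inverse[OF U rc_nonzero smooth_rc])
lemma smooth_HH: "smooth_on U HH" by (intro smooth_on_cdot smooth_hc U)
lemma smooth_Hh0: "smooth_on U Hh0" by (intro smooth_on_cdot smooth_hc smooth_h0 U)

lemma differentiable_F: "w \<in> U \<Longrightarrow> F differentiable (at w)" using smooth_on_differentiable_at[OF U smooth_F] .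
lemma differentiable_p: "w \<in> U \<Longrightarrow> p differentiable (at w)" using smooth_on_differentiable_at[OF U smooth_p] .
lemma differentiable_q: "w \<in> U \<Longrightarrow> q differentiable (at w)" using smooth_on_differentiable_at[OF U smooth_q] .
lemma differentiable_rc: "w \<in> U \<Longrightarrow> rc differentiable (at w)" using smooth_on_differentiable_at[OF U smooth_rc] .
lemma differentiable_rho: "w \<in> U \<Longrightarrow> \<rho> differentiable (at w)" using smooth_on_differentiable_at[OF U smooth_rho] .
lemma differentiable_hc: "w \<in> U \<Longrightarrow> hc differentiable (at w)" using smooth_on_differentiable_at[OF U smooth_hc] .
lemma differentiable_h0: "w \<in> U \<Longrightarrow> h0 differentiable (at w)" using smooth_on_differentiable_at[OF U smooth_h0] .
lemma differentiable_P1: "w \<in> U \<Longrightarrow> P1 differentiable (at w)" using smooth_on_differentiable_at[OF U smooth_P1] .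
lemma differentiable_P2: "w \<in> U \<Longrightarrow> P2 differentiable (at w)" using smooth_on_differentiable_at[OF U smooth_P2] .

lemma dzs_eq_0_on_U: "(\<And>w. w \<in> U \<Longrightarrow> f w = 0) \<Longrightarrow> z \<in> U \<Longrightarrow> dzs f z = 0"
  using dzs_cong[OF U, of z f "\<lambda>w. 0"] dzs_const by simp
lemma dzbs_eq_0_on_U: "(\<And>w. w \<in> U \<Longrightarrow> f w = 0) \<Longrightarrow> z \<in> U \<Longrightarrow> dzbs f z = 0"
  using dzbs_cong[OF U, of z f "\<lambda>w. 0"] dzbs_const by simp

subsection \<open>Structure equations\<close>

lemma pd_pd_F:
  assumes z: "z \<in> U"
  shows "pd1 (pd1 F) z = cvec (pd1 P1 z)" "pd2 (pd2 F) z = cvec (pd2 P2 z)"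
proof -
  have "pd1 (pd1 F) z = pd1 (\<lambda>w. cvec (P1 w)) z" by (rule pd1_cong[OF U z]) (use pd_F in blast)
  also have "\<dots> = cvec (pd1 P1 z)" using pd_lin[OF bounded_linear_cvec differentiable_P1[OF z]] by blast
  finally show "pd1 (pd1 F) z = cvec (pd1 P1 z)" .
  have "pd2 (pd2 F) z = pd2 (\<lambda>w. cvec (P2 w)) z" by (rule pd2_cong[OF U z]) (use pd_F in blast)
  also have "\<dots> = cvec (pd2 P2 z)" using pd_lin[OF bounded_linear_cvec differentiable_P2[OF z]] by blast
  finally show "pd2 (pd2 F) z = cvec (pd2 P2 z)" .
qed

lemma laplace_F:
  assumes z: "z \<in> U"
  shows "dzb p z = (1/4) *s cvec (pd1 P1 z + pd2 P2 z)" "dz q z = (1/4) *s cvec (pd1 P1 z + pd2 P2 z)"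
  unfolding Pz_def Pzb_def dzb_dz_lap[OF U smooth_F z] pd_pd_F[OF z] cvec_add by simp_all

lemma dzb_p_eq_dz_q: "z \<in> U \<Longrightarrow> dzb p z = dz q z" using laplace_F by simp

lemma cdot_dzq_q: "z \<in> U \<Longrightarrow> cdot (dz q z) (q z) = 0"
proof -
  assume z: "z \<in> U"
  have "dzs (\<lambda>w. cdot (q w) (q w)) z = 0" by (rule dzs_eq_0_on_U[OF cdot_qq z])
  then show ?thesis using dzs_cdot[OF differentiable_q[OF z] differentiable_q[OF z]] by (simp add: cdot_commute[of "q z"])
qed

lemma cdot_dzp_p: "z \<in> U \<Longrightarrow> cdot (dz p z) (p z) = 0"
proof -
  assume z: "z \<in> U"
  have "dzs (\<lambda>w. cdot (p w) (p w)) z = 0" by (rule dzs_eq_0_on_U[OF cdot_pp z])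
  then show ?thesis using dzs_cdot[OF differentiable_p[OF z] differentiable_p[OF z]] by (simp add: cdot_commute[of "p z"])
qed

lemma cdot_dzbp_p: "z \<in> U \<Longrightarrow> cdot (dzb p z) (p z) = 0"
proof -
  assume z: "z \<in> U"
  have "dzbs (\<lambda>w. cdot (p w) (p w)) z = 0" by (rule dzbs_eq_0_on_U[OF cdot_pp z])
  then show ?thesis using dzbs_cdot[OF differentiable_p[OF z] differentiable_p[OF z]] by (simp add: cdot_commute[of "p z"])
qed

lemma cdot_dzq_p: "z \<in> U \<Longrightarrow> cdot (dz q z) (p z) = 0"
  using cdot_dzbp_p dzb_p_eq_dz_q by simp

lemma cdot_dzpq: "z \<in> U \<Longrightarrow> cdot (dz p z) (q z) + cdot (p z) (dz q z) = dzs rc z / 2"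
proof -
  assume z: "z \<in> U"
  have "dzs (\<lambda>w. cdot (p w) (q w)) z = dzs (\<lambda>w. rc w * (1/2)) z"
    by (rule dzs_cong[OF U z]) (simp add: cdot_pq)
  also have "\<dots> = dzs rc z / 2" using dzs_mult[OF differentiable_rc[OF z], of "\<lambda>w. 1/2"] dzs_const by simp
  finally show ?thesis using dzs_cdot[OF differentiable_p[OF z] differentiable_q[OF z]] by simp
qed

lemma meanH_eq_laplace: "hr z = (1 / (2 * \<rho> z)) *\<^sub>R nproj \<Phi> z (pd1 P1 z + pd2 P2 z)"
  unfolding meanH_def IIc_def pdk_def nproj_add by simp

lemma dz_q_eq: "z \<in> U \<Longrightarrow> dz q z = (rc z / 2) *s hc z"
proof -
  assume z: "z \<in> U"
  have r: "rc z \<noteq> 0" by (rule rc_nonzero[OF z])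
  have cv: "cvec (pd1 P1 z + pd2 P2 z) = 4 *s dz q z" using laplace_F(2)[OF z] by (simp add: vec_eq_iff mult.commute)
  have tz: "cT \<Phi> z (4 *s dz q z) = 0"
    by (rule cT_eq_0_if_normal[OF z]) (simp_all add: cdot_simps cdot_dzq_q[OF z] cdot_dzq_p[OF z])
  have "hc z = complex_of_real (1 / (2 * \<rho> z)) *s cN \<Phi> z (cvec (pd1 P1 z + pd2 P2 z))"
    unfolding meanH_eq_laplace cvec_scaleR cvec_nproj ..
  also have "\<dots> = complex_of_real (1 / (2 * \<rho> z)) *s (4 *s dz q z)"
    unfolding cv cN_eq_diff_cT tz by simp
  finally have "hc z = (2 / rc z) *s dz q z" by (simp add: vec_eq_iff)
  then show ?thesis using r by (simp add: vec_eq_iff)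
qed

lemma dzb_p_eq: "z \<in> U \<Longrightarrow> dzb p z = (rc z / 2) *s hc z"
  using dz_q_eq dzb_p_eq_dz_q by simp

lemma cdot_hc_p: "z \<in> U \<Longrightarrow> cdot (hc z) (p z) = 0"
proof -
  assume z: "z \<in> U"
  have "cdot ((rc z / 2) *s hc z) (p z) = 0" using cdot_dzq_p[OF z] dz_q_eq[OF z] by simp
  then show ?thesis using rc_nonzero[OF z] by (simp add: cdot_simps)
qed

lemma cdot_hc_q: "z \<in> U \<Longrightarrow> cdot (hc z) (q z) = 0"
proof -
  assume z: "z \<in> U"
  have "cdot ((rc z / 2) *s hc z) (q z) = 0" using cdot_dzq_q[OF z] dz_q_eq[OF z] by simp
  then show ?thesis using rc_nonzero[OF z] by (simp add: cdot_simps)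
qed

lemma cdot_h0_p: "z \<in> U \<Longrightarrow> cdot (h0 z) (p z) = 0"
  unfolding h0c_def by (simp add: cdot_simps cdot_cN_p)
lemma cdot_h0_q: "z \<in> U \<Longrightarrow> cdot (h0 z) (q z) = 0"
  unfolding h0c_def by (simp add: cdot_simps cdot_cN_q)

lemma dz_p_eq: "z \<in> U \<Longrightarrow> dz p z = (dzs rc z / rc z) *s p z + (1/2) *s h0 z"
proof -
  assume z: "z \<in> U"
  have r: "rc z \<noteq> 0" by (rule rc_nonzero[OF z])
  have a: "cdot (dz p z) (q z) = dzs rc z / 2"
    using cdot_dzpq[OF z] dz_q_eq[OF z] cdot_hc_p[OF z] by (simp add: cdot_simps cdot_commute[of "p z"])
  have "h0 z = 2 *s (dz p z - cT \<Phi> z (dz p z))" unfolding h0c_def cN_eq_diff_cT ..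
  also have "\<dots> = 2 *s (dz p z - (2 / rc z) *s ((dzs rc z / 2) *s p z))"
    unfolding cT_eq_frame[OF z] a cdot_dzp_p[OF z] by simp
  finally show ?thesis using r by (simp add: vec_eq_iff field_simps)
qed

lemma dzb_q_eq: "z \<in> U \<Longrightarrow> dzb q z = (dzbs rc z / rc z) *s q z + (1/2) *s vcnj (h0 z)"
proof -
  assume z: "z \<in> U"
  have "dzb q z = dzb (\<lambda>w. vcnj (p w)) z" by (rule dzb_cong[OF U z]) (simp add: q_eq_vcnj_p)
  also have "\<dots> = vcnj (dz p z)" by (rule dzb_vcnj[OF differentiable_p[OF z]])
  also have "\<dots> = (cnj (dzs rc z) / rc z) *s q z + (1/2) *s vcnj (h0 z)"
    unfolding dz_p_eq[OF z] vcnj_add vcnj_smult q_eq_vcnj_p[OF z] by simp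
  also have "cnj (dzs rc z) = dzbs rc z" by (rule dzs_real_cnj[OF differentiable_rho[OF z]])
  finally show ?thesis .
qed

subsection \<open>The Codazzi equation and \<open>\<omega>\<close>\<close>

lemma codazzi: "z \<in> U \<Longrightarrow> cN \<Phi> z (dzb h0 z) = rc z *s cN \<Phi> z (dz hc z)"
proof -
  assume z: "z \<in> U"
  have r: "rc z \<noteq> 0" by (rule rc_nonzero[OF z])
  define a where "a w = 2 * dzs rc w * inverse (rc w)" for w
  have sma: "smooth_on U a" unfolding a_def[abs_def]
    by (intro smooth_on_mult smooth_on_const smooth_on_dzs smooth_rc smooth_inverse_rc U)
  have da: "a differentiable (at z)" using smooth_on_differentiable_at[OF U sma z] .
  have smdzp: "smooth_on U (dz p)" by (rule smooth_on_dz[OF U smooth_p])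
  have h0e: "h0 w = 2 *s dz p w - a w *s p w" if "w \<in> U" for w
    using dz_p_eq[OF that] rc_nonzero[OF that] unfolding a_def by (simp add: vec_eq_iff field_simps)
  have d2: "(\<lambda>w. 2 *s dz p w) differentiable (at z)"
    by (rule bounded_linear_differentiable_at[OF bounded_linear_vec_smult_const smooth_on_differentiable_at[OF U smdzp z]])
  have "dzb h0 z = dzb (\<lambda>w. 2 *s dz p w - a w *s p w) z" by (rule dzb_cong[OF U z]) (simp add: h0e)
  also have "\<dots> = 2 *s dzb (dz p) z - (dzbs a z *s p z + a z *s dzb p z)"
    unfolding dzb_diff[OF d2 bounded_bilinear_differentiable_at[OF bounded_bilinear_vec_smult da differentiable_p[OF z]]] dzb_smult[OF da differentiable_p[OF z]]
      dzb_const_smult[OF smooth_on_differentiable_at[OF U smdzp z]] ..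
  also have "dzb (dz p) z = dz (dzb p) z" using dzb_dz_lap[OF U smooth_p z] by simp
  also have "dz (dzb p) z = dz (\<lambda>w. (rc w * (1/2)) *s hc w) z"
    by (rule dz_cong[OF U z]) (simp add: dzb_p_eq)
  also have "\<dots> = dzs (\<lambda>w. rc w * (1/2)) z *s hc z + (rc z * (1/2)) *s dz hc z"
    by (rule dz_smult[OF differentiable_mult[OF differentiable_rc[OF z] differentiable_const] differentiable_hc[OF z]])
  also have "dzs (\<lambda>w. rc w * (1/2)) z = dzs rc z * (1/2)"
    unfolding dzs_mult[OF differentiable_rc[OF z] differentiable_const] dzs_const by simp
  finally have e: "dzb h0 z = rc z *s dz hc z - dzbs a z *s p z"
    using r unfolding a_def dzb_p_eq[OF z] by (simp add: vec_eq_iff field_simps)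
  show ?thesis
    unfolding cN_eq_diff_cT cT_eq_frame[OF z] e
    using r by (simp add: cdot_simps cdot_pp[OF z] cdot_pq[OF z] cdot_commute[of "q z" "p z"]
        vec_eq_iff field_simps)
qed

lemma cdot_dzbh0_q: "z \<in> U \<Longrightarrow> cdot (dzb h0 z) (q z) = - (1/2) * cdot (h0 z) (vcnj (h0 z))"
proof -
  assume z: "z \<in> U"
  have "dzbs (\<lambda>w. cdot (h0 w) (q w)) z = 0" by (rule dzbs_eq_0_on_U[OF cdot_h0_q z])
  then show ?thesis using dzbs_cdot[OF differentiable_h0[OF z] differentiable_q[OF z]] dzb_q_eq[OF z] cdot_h0_q[OF z]
    by (simp add: cdot_simps eq_neg_iff_add_eq_0)
qed

lemma cdot_dzbh0_p: "z \<in> U \<Longrightarrow> cdot (dzb h0 z) (p z) = - (rc z / 2) * cdot (h0 z) (hc z)"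
proof -
  assume z: "z \<in> U"
  have "dzbs (\<lambda>w. cdot (h0 w) (p w)) z = 0" by (rule dzbs_eq_0_on_U[OF cdot_h0_p z])
  then show ?thesis using dzbs_cdot[OF differentiable_h0[OF z] differentiable_p[OF z]] dzb_p_eq[OF z]
    by (simp add: cdot_simps eq_neg_iff_add_eq_0)
qed

lemma cdot_dzhc_q: "z \<in> U \<Longrightarrow> cdot (dz hc z) (q z) = - (rc z / 2) * cdot (hc z) (hc z)"
proof -
  assume z: "z \<in> U"
  have "dzs (\<lambda>w. cdot (hc w) (q w)) z = 0" by (rule dzs_eq_0_on_U[OF cdot_hc_q z])
  then show ?thesis using dzs_cdot[OF differentiable_hc[OF z] differentiable_q[OF z]] dz_q_eq[OF z]
    by (simp add: cdot_simps eq_neg_iff_add_eq_0)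
qed

lemma cdot_dzhc_p: "z \<in> U \<Longrightarrow> cdot (dz hc z) (p z) = - (1/2) * cdot (hc z) (h0 z)"
proof -
  assume z: "z \<in> U"
  have "dzs (\<lambda>w. cdot (hc w) (p w)) z = 0" by (rule dzs_eq_0_on_U[OF cdot_hc_p z])
  then show ?thesis using dzs_cdot[OF differentiable_hc[OF z] differentiable_p[OF z]] dz_p_eq[OF z] cdot_hc_p[OF z]
    by (simp add: cdot_simps eq_neg_iff_add_eq_0)
qed

lemma wp2_eq: "z \<in> U \<Longrightarrow> complex_of_real (wp2 \<Phi> z) = cdot (h0 z) (vcnj (h0 z)) / (rc z)^2"
proof -
  assume z: "z \<in> U"
  show ?thesis unfolding wp2_def hnorm2_cdot
    by (simp add: cdot_simps vcnj_smult power2_eq_square divide_inverse)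
qed

lemma om_eq_meanH: "z \<in> U \<Longrightarrow> om z = dz hc z + cdot (hc z) (hc z) *s p z + (2 * cdot (hc z) (h0 z) / rc z) *s q z"
proof -
  assume z: "z \<in> U"
  have r: "rc z \<noteq> 0" by (rule rc_nonzero[OF z])
  have cNh: "cN \<Phi> z (dz hc z) = dz hc z + cdot (hc z) (hc z) *s p z + (cdot (hc z) (h0 z) / rc z) *s q z"
    unfolding cN_eq_diff_cT cT_eq_frame[OF z] cdot_dzhc_q[OF z] cdot_dzhc_p[OF z]
    using r by (simp add: vec_eq_iff field_simps)
  have cN1: "cN \<Phi> z (dzb h0 z) = rc z *s dz hc z + (rc z * cdot (hc z) (hc z)) *s p z + cdot (hc z) (h0 z) *s q z"
    unfolding codazzi[OF z] cNh using r by (simp add: vec_eq_iff field_simps)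
  have cT1: "cT \<Phi> z (dzb h0 z) = - (cdot (h0 z) (vcnj (h0 z)) / rc z) *s p z - cdot (h0 z) (hc z) *s q z"
    unfolding cT_eq_frame[OF z] cdot_dzbh0_q[OF z] cdot_dzbh0_p[OF z]
    using r by (simp add: vec_eq_iff field_simps)
  show ?thesis
    unfolding omegac_def cN1 cT1 wp2_eq[OF z]
    using r by (simp add: vec_eq_iff field_simps cdot_commute[of "h0 z" "hc z"] power2_eq_square)
qed

subsection \<open>The Willmore equation\<close>

lemma inner_hr_P: "w \<in> U \<Longrightarrow> hr w \<bullet> P1 w = 0 \<and> hr w \<bullet> P2 w = 0"
proof -
  assume w: "w \<in> U"
  have a: "cdot (hc w) (p w) + cdot (hc w) (q w) = complex_of_real (hr w \<bullet> P1 w)"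
    unfolding p_eq[OF w] q_eq[OF w] by (simp add: cdot_simps cdot_cvec field_simps)
  have b: "cdot (hc w) (q w) - cdot (hc w) (p w) = \<i> * complex_of_real (hr w \<bullet> P2 w)"
    unfolding p_eq[OF w] q_eq[OF w] by (simp add: cdot_simps cdot_cvec field_simps)
  show ?thesis using a b cdot_hc_p[OF w] cdot_hc_q[OF w] by simp
qed

lemma nproj_P_zero: "w \<in> U \<Longrightarrow> nproj \<Phi> w (P1 w) = 0 \<and> nproj \<Phi> w (P2 w) = 0"
proof -
  assume w: "w \<in> U"
  have r: "\<rho> w \<noteq> 0" using rho_pos[OF w] by simp
  have c: "P1 w \<bullet> P2 w = 0" "P1 w \<bullet> P1 w = \<rho> w" "P2 w \<bullet> P2 w = \<rho> w"
    using conformal_frame[OF w] rho_eq[OF w] by auto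
  show ?thesis unfolding nproj_def tproj_def using r c by (simp add: inner_commute)
qed

lemma inner_hr_tproj: "w \<in> U \<Longrightarrow> hr w \<bullet> tproj \<Phi> w x = 0"
  unfolding tproj_def using inner_hr_P by (simp add: inner_add_right)
lemma inner_hr_nproj: "w \<in> U \<Longrightarrow> hr w \<bullet> nproj \<Phi> w x = hr w \<bullet> x"
  unfolding nproj_def using inner_hr_tproj by (simp add: inner_diff_right)

text \<open>Differentiating \<open>H \<bullet> P1 = H \<bullet> P2 = 0\<close> yields the tangential part of a derivative of \<open>H\<close>.\<close>
lemma nproj_pdk_hr:
  assumes w: "w \<in> U"
  shows "nproj \<Phi> w (pdk k hr w) =
    pdk k hr w + (1 / \<rho> w) *\<^sub>R ((hr w \<bullet> pdk k P1 w) *\<^sub>R P1 w + (hr w \<bullet> pdk k P2 w) *\<^sub>R P2 w)"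
proof -
  have dd: "\<And>f. smooth_on U f \<Longrightarrow> f differentiable (at w)" using smooth_on_differentiable_at[OF U _ w] .
  have "pdk k hr w \<bullet> P w = - (hr w \<bullet> pdk k P w)" if P: "smooth_on U P" "\<And>w. w \<in> U \<Longrightarrow> hr w \<bullet> P w = 0" for P
  proof -
    have "pdk k (\<lambda>w. hr w \<bullet> P w) w = 0"
      using pdk_cong[OF U w, of "\<lambda>w. hr w \<bullet> P w" "\<lambda>w. 0" k] P(2) pdk_const by simp
    then show ?thesis using pdk_bil[OF bounded_bilinear_inner dd[OF smooth_hr] dd[OF P(1)], of k] by simp
  qed
  from this[OF smooth_P1] this[OF smooth_P2] inner_hr_P show ?thesis
    unfolding nproj_def tproj_def by (simp add: algebra_simps)
qed

lemma nproj_pdk: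
  assumes z: "z \<in> U"
  shows "nproj \<Phi> z (pdk k (\<lambda>w. nproj \<Phi> w (pdk k hr w)) z) =
    nproj \<Phi> z (pdk k (pdk k hr) z) + (1 / \<rho> z) *\<^sub>R
      ((hr z \<bullet> pdk k P1 z) *\<^sub>R nproj \<Phi> z (pdk k P1 z) + (hr z \<bullet> pdk k P2 z) *\<^sub>R nproj \<Phi> z (pdk k P2 z))"
proof -
  define a1 where "a1 w = hr w \<bullet> pdk k P1 w" for w
  define a2 where "a2 w = hr w \<bullet> pdk k P2 w" for w
  define K where "K w = a1 w *\<^sub>R P1 w + a2 w *\<^sub>R P2 w" for w
  define G where "G w = (1 / \<rho> w) *\<^sub>R K w" for w
  have sma1: "smooth_on U a1" unfolding a1_def[abs_def] by (intro smooth_on_inner smooth_hr smooth_on_pdk smooth_P1 U)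
  have sma2: "smooth_on U a2" unfolding a2_def[abs_def] by (intro smooth_on_inner smooth_hr smooth_on_pdk smooth_P2 U)
  have smK: "smooth_on U K" unfolding K_def[abs_def] by (intro smooth_on_add smooth_on_scaleR sma1 sma2 smooth_P1 smooth_P2 U)
  have smG: "smooth_on U G" unfolding G_def[abs_def] by (intro smooth_on_scaleR smooth_inverse_rho smK U)
  have smDh: "smooth_on U (pdk k hr)" by (rule smooth_on_pdk[OF smooth_hr])
  have dd: "\<And>f. smooth_on U f \<Longrightarrow> f differentiable (at z)" using smooth_on_differentiable_at[OF U _ z] .
  have "pdk k (\<lambda>w. nproj \<Phi> w (pdk k hr w)) z = pdk k (\<lambda>w. pdk k hr w + G w) z"
    by (rule pdk_cong[OF U z]) (simp add: nproj_pdk_hr G_def K_def a1_def a2_def)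
  also have "\<dots> = pdk k (pdk k hr) z + pdk k G z"
    by (rule pdk_add[OF dd[OF smDh] dd[OF smG]])
  also have "pdk k G z = pdk k (\<lambda>w. 1 / \<rho> w) z *\<^sub>R K z + (1 / \<rho> z) *\<^sub>R pdk k K z"
    unfolding G_def by (rule pdk_bil[OF bounded_bilinear_scaleR dd[OF smooth_inverse_rho] dd[OF smK]])
  also have "pdk k K z = (pdk k a1 z *\<^sub>R P1 z + a1 z *\<^sub>R pdk k P1 z) + (pdk k a2 z *\<^sub>R P2 z + a2 z *\<^sub>R pdk k P2 z)"
    unfolding K_def pdk_add[OF bounded_bilinear_differentiable_at[OF bounded_bilinear_scaleR dd[OF sma1] dd[OF smooth_P1]]
        bounded_bilinear_differentiable_at[OF bounded_bilinear_scaleR dd[OF sma2] dd[OF smooth_P2]]]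
      pdk_bil[OF bounded_bilinear_scaleR dd[OF sma1] dd[OF smooth_P1]]
      pdk_bil[OF bounded_bilinear_scaleR dd[OF sma2] dd[OF smooth_P2]] ..
  finally show ?thesis
    using nproj_P_zero[OF z] unfolding K_def a1_def a2_def
    by (simp add: nproj_add nproj_scale)
qed

lemma lapN_eq:
  assumes z: "z \<in> U"
  shows "lapN \<Phi> hr z = (1 / \<rho> z) *\<^sub>R nproj \<Phi> z (pd1 (pd1 hr) z + pd2 (pd2 hr) z) + simonsA \<Phi> z"
proof -
  have r: "\<rho> z \<noteq> 0" using rho_pos[OF z] by simp
  have k1: "pdk 1 = pd1" and k2: "pdk 2 = pd2" unfolding pdk_def[abs_def] by auto
  have II: "IIc \<Phi> i j z = nproj \<Phi> z (pdk i (pdk j \<Phi>) z)" for i j unfolding IIc_def ..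
  have x: "hr z \<bullet> pdk i (pdk j \<Phi>) z = hr z \<bullet> IIc \<Phi> i j z" for i j
    unfolding II inner_hr_nproj[OF z] ..
  have s: "(\<Sum>i\<in>{1::nat,2}. g i) = g 1 + g 2" for g :: "nat \<Rightarrow> real^'n" by simp
  have s2: "(\<Sum>i\<in>{1::nat,2}. g i) = g 1 + g 2" for g :: "nat \<Rightarrow> real^'n" by simp
  have A1: "nproj \<Phi> z (pdk 1 (\<lambda>w. nproj \<Phi> w (pdk 1 hr w)) z) = nproj \<Phi> z (pd1 (pd1 hr) z) +
     (1 / \<rho> z) *\<^sub>R ((hr z \<bullet> IIc \<Phi> 1 1 z) *\<^sub>R IIc \<Phi> 1 1 z + (hr z \<bullet> IIc \<Phi> 1 2 z) *\<^sub>R IIc \<Phi> 1 2 z)"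
    using nproj_pdk[OF z, of 1] x[of 1 1] x[of 1 2] unfolding II k1 k2 by simp
  have A2: "nproj \<Phi> z (pdk 2 (\<lambda>w. nproj \<Phi> w (pdk 2 hr w)) z) = nproj \<Phi> z (pd2 (pd2 hr) z) +
     (1 / \<rho> z) *\<^sub>R ((hr z \<bullet> IIc \<Phi> 2 1 z) *\<^sub>R IIc \<Phi> 2 1 z + (hr z \<bullet> IIc \<Phi> 2 2 z) *\<^sub>R IIc \<Phi> 2 2 z)"
    using nproj_pdk[OF z, of 2] x[of 2 1] x[of 2 2] unfolding II k1 k2 by simp
  show ?thesis
    unfolding lapN_def simonsA_def s A1 A2 nproj_add
    using r by (simp add: algebra_simps inner_commute power2_eq_square)
qed

lemma pd_pd_F_mixed:
  assumes z: "z \<in> U"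
  shows "pd1 (pd2 F) z = cvec (pd1 P2 z)" "pd2 (pd1 F) z = cvec (pd2 P1 z)"
proof -
  have "pd1 (pd2 F) z = pd1 (\<lambda>w. cvec (P2 w)) z" by (rule pd1_cong[OF U z]) (use pd_F in blast)
  also have "\<dots> = cvec (pd1 P2 z)" using pd_lin[OF bounded_linear_cvec differentiable_P2[OF z]] by blast
  finally show "pd1 (pd2 F) z = cvec (pd1 P2 z)" .
  have "pd2 (pd1 F) z = pd2 (\<lambda>w. cvec (P1 w)) z" by (rule pd2_cong[OF U z]) (use pd_F in blast)
  also have "\<dots> = cvec (pd2 P1 z)" using pd_lin[OF bounded_linear_cvec differentiable_P1[OF z]] by blast
  finally show "pd2 (pd1 F) z = cvec (pd2 P1 z)" .
qed

lemma pd_P_commute: "z \<in> U \<Longrightarrow> pd1 P2 z = pd2 P1 z"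
  using pd_commute[OF U smooth_on_imp_C2[OF smooth]] by blast

lemma h0_eq_IIc: "z \<in> U \<Longrightarrow> h0 z = cvec ((1/2) *\<^sub>R (IIc \<Phi> 1 1 z - IIc \<Phi> 2 2 z)) - \<i> *s cvec (IIc \<Phi> 1 2 z)"
proof -
  assume z: "z \<in> U"
  have "dz p z = (1/4) *s (cvec (pd1 P1 z) - cvec (pd2 P2 z) - \<i> *s (cvec (pd1 P2 z) + cvec (pd2 P1 z)))"
    unfolding Pz_def dz_dz_eq[OF U smooth_F z] pd_pd_F[OF z] pd_pd_F_mixed[OF z] ..
  also have "\<dots> = cvec ((1/4) *\<^sub>R (pd1 P1 z - pd2 P2 z)) + \<i> *s cvec ((- 1/2) *\<^sub>R pd1 P2 z)"
    unfolding pd_P_commute[OF z] by (simp add: vec_eq_iff field_simps)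
  finally have e: "dz p z = \<dots>" .
  show ?thesis unfolding h0c_def e cN_cvec_complex nproj_scale nproj_diff IIc_def pdk_def
    by (simp add: vec_eq_iff field_simps)
qed

lemma simonsA_eq:
  assumes z: "z \<in> U"
  shows "simonsA \<Phi> z = (2 * (hr z \<bullet> hr z)) *\<^sub>R hr z + (2 / (\<rho> z)\<^sup>2) *\<^sub>R
     ((hr z \<bullet> ((1/2) *\<^sub>R (IIc \<Phi> 1 1 z - IIc \<Phi> 2 2 z))) *\<^sub>R ((1/2) *\<^sub>R (IIc \<Phi> 1 1 z - IIc \<Phi> 2 2 z))
      + (hr z \<bullet> IIc \<Phi> 1 2 z) *\<^sub>R IIc \<Phi> 1 2 z)"
proof -
  have r: "\<rho> z \<noteq> 0" using rho_pos[OF z] by simp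
  define a where "a = (1/2) *\<^sub>R (IIc \<Phi> 1 1 z - IIc \<Phi> 2 2 z)"
  define c where "c = IIc \<Phi> 1 2 z"
  have hr: "hr z = (1 / (2 * \<rho> z)) *\<^sub>R (IIc \<Phi> 1 1 z + IIc \<Phi> 2 2 z)" unfolding meanH_def ..
  have e11: "IIc \<Phi> 1 1 z = \<rho> z *\<^sub>R hr z + a" unfolding hr a_def using r by (simp add: vec_eq_iff field_simps)
  have e22: "IIc \<Phi> 2 2 z = \<rho> z *\<^sub>R hr z - a" unfolding hr a_def using r by (simp add: vec_eq_iff field_simps)
  have e21: "IIc \<Phi> 2 1 z = c" unfolding c_def IIc_def pdk_def using pd_P_commute[OF z] by simp
  have s: "(\<Sum>i\<in>{1::nat,2}. g i) = g 1 + g 2" for g :: "nat \<Rightarrow> real^'n" by simp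
  show ?thesis
    unfolding simonsA_def s e11 e22 e21 a_def[symmetric] c_def[symmetric]
    using simons_sum_identity[OF r, of "hr z" a c] by simp
qed

lemma cvec_simonsA_eq:
  assumes z: "z \<in> U"
  shows "cvec (simonsA \<Phi> z) = (2 * cdot (hc z) (hc z)) *s hc z + (1 / (rc z)\<^sup>2) *s
     (cdot (hc z) (h0 z) *s vcnj (h0 z) + cnj (cdot (hc z) (h0 z)) *s h0 z)"
proof -
  define a where "a = (1/2) *\<^sub>R (IIc \<Phi> 1 1 z - IIc \<Phi> 2 2 z)"
  define c where "c = IIc \<Phi> 1 2 z"
  have h: "h0 z = cvec a - \<i> *s cvec c" unfolding a_def c_def by (rule h0_eq_IIc[OF z])
  have cd: "cdot (hc z) (h0 z) = complex_of_real (hr z \<bullet> a) - \<i> * complex_of_real (hr z \<bullet> c)"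
    unfolding h by (simp add: cdot_simps cdot_cvec)
  show ?thesis
    unfolding simonsA_eq[OF z] a_def[symmetric] c_def[symmetric] cd cdot_cvec
    unfolding h by (simp add: vec_eq_iff field_simps complex_eq_iff power2_eq_square)
qed

lemma willmore_normal_laplacian:
  assumes z: "z \<in> U" and W: "willmore_on U \<Phi>"
  shows "cvec (nproj \<Phi> z (pd1 (pd1 hr) z + pd2 (pd2 hr) z)) =
     rc z *s ((2 * cdot (hc z) (hc z)) *s hc z - 2 *s cvec (simonsA \<Phi> z))"
proof -
  have r: "\<rho> z \<noteq> 0" using rho_pos[OF z] by simp
  define N where "N = nproj \<Phi> z (pd1 (pd1 hr) z + pd2 (pd2 hr) z)"
  have E: "lapN \<Phi> hr z - (2 * (norm (hr z))\<^sup>2) *\<^sub>R hr z + simonsA \<Phi> z = 0"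
    using W z unfolding willmore_on_def by blast
  have Ni: "N $ i = \<rho> z * (2 * (hr z \<bullet> hr z) * hr z $ i - 2 * simonsA \<Phi> z $ i)" for i
  proof -
    have a: "lapN \<Phi> hr z $ i - 2 * (hr z \<bullet> hr z) * hr z $ i + simonsA \<Phi> z $ i = 0"
      using arg_cong[OF E, of "\<lambda>v. v $ i"] by (simp add: power2_norm_eq_inner)
    have b: "lapN \<Phi> hr z $ i = (1 / \<rho> z) * N $ i + simonsA \<Phi> z $ i"
      unfolding lapN_eq[OF z] N_def by simp
    from a b have "(1 / \<rho> z) * N $ i = 2 * (hr z \<bullet> hr z) * hr z $ i - 2 * simonsA \<Phi> z $ i" by simp
    then show ?thesis using r by (simp add: field_simps)
  qed
  show ?thesis unfolding N_def[symmetric] vec_eq_iff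
  proof
    fix i show "cvec N $ i = (rc z *s ((2 * cdot (hc z) (hc z)) *s hc z - 2 *s cvec (simonsA \<Phi> z))) $ i"
      using Ni[of i] by (simp add: cdot_cvec) (simp add: algebra_simps)
  qed
qed

lemma HH_eq_inner: "HH = (\<lambda>w. complex_of_real (hr w \<bullet> hr w))"
  by (simp add: fun_eq_iff cdot_cvec)

lemma cnj_dzbs_HH: "z \<in> U \<Longrightarrow> cnj (dzbs HH z) = dzs HH z"
proof -
  assume z: "z \<in> U"
  have d: "(\<lambda>w. hr w \<bullet> hr w) differentiable (at z)" by (rule smooth_on_differentiable_at[OF U smooth_on_inner[OF U smooth_hr smooth_hr] z])
  show ?thesis unfolding HH_eq_inner using dzs_real_cnj[OF d] by (metis complex_cnj_cnj)
qed

lemma cdot_dzb_dz_hc_p: "z \<in> U \<Longrightarrow> cdot (dzb (dz hc) z) (p z) = - (1/2) * dzbs Hh0 z - (rc z / 4) * dzs HH z"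
proof -
  assume z: "z \<in> U"
  have ddz: "dz hc differentiable (at z)" by (rule smooth_on_differentiable_at[OF U smooth_on_dz[OF U smooth_hc] z])
  have "dzbs (\<lambda>w. cdot (dz hc w) (p w)) z = dzbs (\<lambda>w. - (1/2) * Hh0 w) z"
    by (rule dzbs_cong[OF U z]) (simp add: cdot_dzhc_p)
  also have "\<dots> = - (1/2) * dzbs Hh0 z" by (rule dzbs_cmult[OF smooth_on_differentiable_at[OF U smooth_Hh0 z]])
  finally have a: "cdot (dzb (dz hc) z) (p z) + cdot (dz hc z) (dzb p z) = - (1/2) * dzbs Hh0 z"
    using dzbs_cdot[OF ddz differentiable_p[OF z]] by simp
  have b: "dzs HH z = 2 * cdot (dz hc z) (hc z)"
    using dzs_cdot[OF differentiable_hc[OF z] differentiable_hc[OF z]] by (simp add: cdot_commute[of "hc z"])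
  show ?thesis using a b unfolding dzb_p_eq[OF z] by (simp add: cdot_simps field_simps)
qed

lemma cdot_hc_vcnj_h0: "cdot (hc w) (vcnj (h0 w)) = cnj (Hh0 w)"
proof -
  have "cdot (hc w) (vcnj (h0 w)) = cdot (vcnj (hc w)) (vcnj (h0 w))" by simp
  then show ?thesis unfolding cdot_vcnj by simp
qed

lemma cdot_dzb_hc_q: "w \<in> U \<Longrightarrow> cdot (dzb hc w) (q w) = - (1/2) * cnj (Hh0 w)"
proof -
  assume w: "w \<in> U"
  have "dzbs (\<lambda>w. cdot (hc w) (q w)) w = 0" by (rule dzbs_eq_0_on_U[OF cdot_hc_q w])
  then show ?thesis using dzbs_cdot[OF differentiable_hc[OF w] differentiable_q[OF w]] dzb_q_eq[OF w] cdot_hc_q[OF w] cdot_hc_vcnj_h0[of w]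
    by (simp add: cdot_simps eq_neg_iff_add_eq_0)
qed

lemma cdot_dzb_dz_hc_q: "z \<in> U \<Longrightarrow> cdot (dzb (dz hc) z) (q z) = - (1/2) * cnj (dzbs Hh0 z) - (rc z / 4) * dzbs HH z"
proof -
  assume z: "z \<in> U"
  have ddzb: "dzb hc differentiable (at z)" by (rule smooth_on_differentiable_at[OF U smooth_on_dzb[OF U smooth_hc] z])
  have dc: "(\<lambda>w. cnj (Hh0 w)) differentiable (at z)" by (rule smooth_on_differentiable_at[OF U smooth_on_cnj[OF U smooth_Hh0] z])
  have "dzs (\<lambda>w. cdot (dzb hc w) (q w)) z = dzs (\<lambda>w. - (1/2) * cnj (Hh0 w)) z"
    by (rule dzs_cong[OF U z]) (simp add: cdot_dzb_hc_q)
  also have "\<dots> = - (1/2) * cnj (dzbs Hh0 z)"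
    unfolding dzs_cmult[OF dc] dzs_cnj[OF smooth_on_differentiable_at[OF U smooth_Hh0 z]] ..
  finally have a: "cdot (dz (dzb hc) z) (q z) + cdot (dzb hc z) (dz q z) = - (1/2) * cnj (dzbs Hh0 z)"
    using dzs_cdot[OF ddzb differentiable_q[OF z]] by simp
  have b: "dzbs HH z = 2 * cdot (dzb hc z) (hc z)"
    using dzbs_cdot[OF differentiable_hc[OF z] differentiable_hc[OF z]] by (simp add: cdot_commute[of "hc z"])
  have c: "dz (dzb hc) z = dzb (dz hc) z" using dzb_dz_lap[OF U smooth_hc z] by simp
  show ?thesis using a b unfolding dz_q_eq[OF z] c by (simp add: cdot_simps field_simps)
qed

lemma pd_pd_hc:
  assumes z: "z \<in> U"
  shows "pd1 (pd1 hc) z = cvec (pd1 (pd1 hr) z)" "pd2 (pd2 hc) z = cvec (pd2 (pd2 hr) z)"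
proof -
  have dh: "\<And>w. w \<in> U \<Longrightarrow> hr differentiable (at w)" using smooth_on_differentiable_at[OF U smooth_hr] .
  have p1: "pd1 hc w = cvec (pd1 hr w)" "pd2 hc w = cvec (pd2 hr w)" if "w \<in> U" for w
    using pd_lin[OF bounded_linear_cvec dh[OF that]] by blast+
  have "pd1 (pd1 hc) z = pd1 (\<lambda>w. cvec (pd1 hr w)) z" by (rule pd1_cong[OF U z]) (use p1 in blast)
  also have "\<dots> = cvec (pd1 (pd1 hr) z)" using pd_lin[OF bounded_linear_cvec smooth_on_differentiable_at[OF U smooth_on_pd1[OF smooth_hr] z]] by blast
  finally show "pd1 (pd1 hc) z = cvec (pd1 (pd1 hr) z)" .
  have "pd2 (pd2 hc) z = pd2 (\<lambda>w. cvec (pd2 hr w)) z" by (rule pd2_cong[OF U z]) (use p1 in blast)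
  also have "\<dots> = cvec (pd2 (pd2 hr) z)" using pd_lin[OF bounded_linear_cvec smooth_on_differentiable_at[OF U smooth_on_pd2[OF smooth_hr] z]] by blast
  finally show "pd2 (pd2 hc) z = cvec (pd2 (pd2 hr) z)" .
qed

text \<open>The normal part of \<open>d_zbar d_z H\<close> is given by the Willmore equation, its tangential
  part by differentiating \<open>\<langle>d_z H, p\<rangle> = -\<langle>H, h0\<rangle>/2\<close> and \<open>\<langle>d_zbar H, q\<rangle> = -cnj \<langle>H, h0\<rangle>/2\<close>.\<close>
lemma dzb_dz_hc_eq:
  assumes z: "z \<in> U" and W: "willmore_on U \<Phi>"
  shows "dzb (dz hc) z = (rc z / 4) *s ((2 * HH z) *s hc z - 2 *s cvec (simonsA \<Phi> z))
      + (2 / rc z) *s ((- (1/2) * cnj (dzbs Hh0 z) - (rc z / 4) * dzbs HH z) *s p z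
                      + (- (1/2) * dzbs Hh0 z - (rc z / 4) * dzs HH z) *s q z)"
proof -
  define D where "D = pd1 (pd1 hr) z + pd2 (pd2 hr) z"
  have e: "dzb (dz hc) z = (1/4) *s cvec D"
    unfolding dzb_dz_lap(1)[OF U smooth_hc z] pd_pd_hc[OF z] D_def by (simp add: cvec_add)
  have "cvec D = cvec (nproj \<Phi> z D) + cT \<Phi> z (cvec D)"
    unfolding cT_cvec nproj_def by (simp add: cvec_diff)
  also have "cT \<Phi> z (cvec D) = 4 *s cT \<Phi> z (dzb (dz hc) z)"
    unfolding e cT_eq_frame[OF z] by (simp add: vec_eq_iff cdot_simps field_simps)
  finally have "dzb (dz hc) z = (1/4) *s (cvec (nproj \<Phi> z D) + 4 *s cT \<Phi> z (dzb (dz hc) z))"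
    using e by simp
  then have "dzb (dz hc) z = (rc z / 4) *s ((2 * HH z) *s hc z - 2 *s cvec (simonsA \<Phi> z))
      + (2 / rc z) *s (cdot (dzb (dz hc) z) (q z) *s p z + cdot (dzb (dz hc) z) (p z) *s q z)"
    unfolding D_def willmore_normal_laplacian[OF z W] cT_eq_frame[OF z]
    by (simp add: vec_eq_iff field_simps)
  then show ?thesis by (simp only: cdot_dzb_dz_hc_p[OF z] cdot_dzb_dz_hc_q[OF z])
qed

subsection \<open>Conservation laws\<close>

lemma dzb_om_eq:
  assumes z: "z \<in> U"
  shows "dzb om z = dzb (dz hc) z + (dzbs HH z *s p z + HH z *s dzb p z)
    + ((2 * dzbs Hh0 z * inverse (rc z) + 2 * Hh0 z * (- dzbs rc z / (rc z)\<^sup>2)) *s q z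
       + (2 * Hh0 z * inverse (rc z)) *s dzb q z)"
proof -
  define g where "g w = (2 * Hh0 w) * inverse (rc w)" for w
  have smg: "smooth_on U g" unfolding g_def[abs_def]
    by (intro smooth_on_mult smooth_on_const smooth_Hh0 smooth_inverse_rc U)
  have dd: "\<And>f. smooth_on U f \<Longrightarrow> f differentiable (at z)" using smooth_on_differentiable_at[OF U _ z] .
  have smdzhc: "smooth_on U (dz hc)" by (rule smooth_on_dz[OF U smooth_hc])
  have d1: "(\<lambda>w. HH w *s p w) differentiable (at z)"
    by (rule dd, intro smooth_on_vec_smult smooth_HH smooth_p U)
  have d2: "(\<lambda>w. g w *s q w) differentiable (at z)"
    by (rule dd, intro smooth_on_vec_smult smg smooth_q U)
  have d12: "(\<lambda>w. dz hc w + HH w *s p w) differentiable (at z)"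
    by (rule dd, intro smooth_on_add smooth_on_vec_smult smdzhc smooth_HH smooth_p U)
  have "dzb om z = dzb (\<lambda>w. (dz hc w + HH w *s p w) + g w *s q w) z"
    by (rule dzb_cong[OF U z]) (simp add: om_eq_meanH g_def divide_inverse)
  also have "\<dots> = dzb (dz hc) z + (dzbs HH z *s p z + HH z *s dzb p z) + (dzbs g z *s q z + g z *s dzb q z)"
    unfolding dzb_add[OF d12 d2] dzb_add[OF dd[OF smdzhc] d1]
      dzb_smult[OF dd[OF smooth_HH] differentiable_p[OF z]] dzb_smult[OF dd[OF smg] differentiable_q[OF z]] ..
  also have "dzbs g z = 2 * dzbs Hh0 z * inverse (rc z) + 2 * Hh0 z * (- dzbs rc z / (rc z)\<^sup>2)"
    unfolding g_def dzbs_mult[OF dd[OF smooth_on_mult[OF U smooth_on_const smooth_Hh0]] dd[OF smooth_inverse_rc]]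
      dzbs_cmult[OF dd[OF smooth_Hh0]] dzbs_inverse[OF differentiable_rc[OF z] rc_nonzero[OF z]] ..
  finally show ?thesis unfolding g_def .
qed

text \<open>This is the Willmore equation in conservation form: after inserting the structure
  equations, each coordinate of \<open>d_zbar om\<close> has the form \<open>Y - cnj Y\<close>.\<close>
lemma vRe_dzb_om:
  assumes z: "z \<in> U" and W: "willmore_on U \<Phi>"
  shows "vRe (dzb om z) = 0"
proof (rule vec_eq_iff[THEN iffD2], rule allI)
  fix k
  have rcz: "rc z \<noteq> 0" using rc_nonzero[OF z] .
  define A where "A = dzbs Hh0 z"
  define B where "B = dzbs HH z"
  have cB: "dzs HH z = cnj B" unfolding B_def using cnj_dzbs_HH[OF z] by simp
  define P where "P = p z $ k"
  define E where "E = h0 z $ k"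
  define C where "C = Hh0 z"
  define Y where "Y = (- (1 / rc z) * cnj A + (1/2) * B) * P + (1 / (2 * rc z)) * C * cnj E"
  have qk: "q z $ k = cnj P" unfolding P_def using q_eq_vcnj_p[OF z] by simp
  have "dzb om z $ k = Y - cnj Y"
    unfolding dzb_om_eq[OF z] dzb_dz_hc_eq[OF z W] dzb_p_eq[OF z] dzb_q_eq[OF z] cvec_simonsA_eq[OF z]
      cB A_def[symmetric] B_def[symmetric] Y_def
    apply (simp add: qk P_def[symmetric] E_def[symmetric] C_def[symmetric])
    using rcz apply (simp add: field_simps power2_eq_square)
    done
  then show "vRe (dzb om z) $ k = 0 $ k" by simp
qed

lemma Re_dzb_om_nth: "z \<in> U \<Longrightarrow> willmore_on U \<Phi> \<Longrightarrow> Re (dzb om z $ k) = 0"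
  using vRe_dzb_om[of z] by (metis vRe_nth zero_index)

lemma Re_cdot_F_dzb_om: "z \<in> U \<Longrightarrow> willmore_on U \<Phi> \<Longrightarrow> Re (cdot (F z) (dzb om z)) = 0"
  unfolding Re_cdot_cvec using vRe_dzb_om by simp

lemma cnj_cdot_h0_vcnj_h0: "cnj (cdot (h0 z) (vcnj (h0 z))) = cdot (h0 z) (vcnj (h0 z))"
  using cdot_vcnj[of "h0 z" "vcnj (h0 z)"] by (simp add: cdot_commute)

lemma om_eq_h0: "z \<in> U \<Longrightarrow> om z = (1 / rc z) *s dzb h0 z + (cdot (h0 z) (vcnj (h0 z)) / (rc z)\<^sup>2) *s p z
   - (4 * cdot (dzb h0 z) (p z) / (rc z)\<^sup>2) *s q z"
proof -
  assume z: "z \<in> U"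
  have r: "rc z \<noteq> 0" by (rule rc_nonzero[OF z])
  have of: "complex_of_real (1 / \<rho> z) = 1 / rc z" by simp
  show ?thesis unfolding omegac_def of wp2_eq[OF z] cN_eq_diff_cT cT_eq_frame[OF z] cdot_dzbh0_q[OF z]
    using r by (simp add: vec_eq_iff field_simps power2_eq_square)
qed

lemma cdot_q_om: "z \<in> U \<Longrightarrow> cdot (q z) (om z) = 0"
proof -
  assume z: "z \<in> U"
  have r: "rc z \<noteq> 0" by (rule rc_nonzero[OF z])
  show ?thesis unfolding om_eq_h0[OF z]
    using r by (simp add: cdot_simps cdot_qq[OF z] cdot_commute[of "q z" "p z"] cdot_pq[OF z]
      cdot_commute[of "q z" "dzb h0 z"] cdot_dzbh0_q[OF z] field_simps power2_eq_square)
qed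

lemma Re_dzbs_form_dil: "z \<in> U \<Longrightarrow> willmore_on U \<Phi> \<Longrightarrow> Re (dzbs (form_dil \<Phi>) z) = 0"
proof -
  assume z: "z \<in> U" and W: "willmore_on U \<Phi>"
  have "dzbs (form_dil \<Phi>) z = cdot (q z) (om z) + cdot (F z) (dzb om z)"
    unfolding form_dil_def[abs_def] dzbs_cdot[OF differentiable_F[OF z] smooth_on_differentiable_at[OF U smooth_om z]] Pzb_def ..
  then show ?thesis using cdot_q_om[OF z] Re_cdot_F_dzb_om[OF z W] by simp
qed

lemma dzb_F: "dzb F z = q z" unfolding Pzb_def ..

lemma dzbs_form_rot_eq:
  assumes z: "z \<in> U"
  shows "dzbs (\<lambda>w. form_rot \<Phi> w $ i $ j) z =
     ((q z $ i * om z $ j + F z $ i * dzb om z $ j) - (q z $ j * om z $ i + F z $ j * dzb om z $ i))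
     + ((- dzbs rc z / (rc z)\<^sup>2) * (h0 z $ i * q z $ j - h0 z $ j * q z $ i)
     + inverse (rc z) * ((dzb h0 z $ i * q z $ j + h0 z $ i * dzb q z $ j)
                         - (dzb h0 z $ j * q z $ i + h0 z $ j * dzb q z $ i)))"
proof -
  have dom: "om differentiable (at z)" by (rule smooth_on_differentiable_at[OF U smooth_om z])
  have dinv: "(\<lambda>w. inverse (rc w)) differentiable (at z)"
    by (rule smooth_on_differentiable_at[OF U smooth_inverse_rc z])
  have fr: "(\<lambda>w. form_rot \<Phi> w $ i $ j) = (\<lambda>w. (F w $ i * om w $ j - F w $ j * om w $ i)
      + inverse (rc w) * (h0 w $ i * q w $ j - h0 w $ j * q w $ i))"
    unfolding form_rot_def[abs_def] cwedge_def by (simp add: fun_eq_iff scaleR_conv_of_real divide_inverse)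
  have pr: "(\<lambda>w. G w $ k * H w $ l) differentiable (at z)"
    if "G differentiable (at z)" "H differentiable (at z)" for G H :: "complex \<Rightarrow> complex^'n" and k l
    by (intro differentiable_mult nth_differentiable that)
  have da: "(\<lambda>w. F w $ i * om w $ j) differentiable (at z)" "(\<lambda>w. F w $ j * om w $ i) differentiable (at z)"
    by (rule pr[OF differentiable_F[OF z] dom])+
  have dc: "(\<lambda>w. h0 w $ i * q w $ j) differentiable (at z)" "(\<lambda>w. h0 w $ j * q w $ i) differentiable (at z)"
    by (rule pr[OF differentiable_h0[OF z] differentiable_q[OF z]])+
  have dcd: "(\<lambda>w. h0 w $ i * q w $ j - h0 w $ j * q w $ i) differentiable (at z)"
    by (rule differentiable_diff[OF dc])
  show ?thesis
    unfolding fr dzbs_add[OF differentiable_diff[OF da] differentiable_mult[OF dinv dcd]]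
      dzbs_diff[OF da] dzbs_mult[OF dinv dcd] dzbs_diff[OF dc]
      dzbs_nth_mult[OF differentiable_F[OF z] dom] dzbs_nth_mult[OF differentiable_h0[OF z] differentiable_q[OF z]]
      dzbs_inverse[OF differentiable_rc[OF z] rc_nonzero[OF z]] dzb_F
    by simp
qed

lemma Re_dzbs_form_rot:
  assumes z: "z \<in> U" and W: "willmore_on U \<Phi>"
  shows "Re (dzbs (\<lambda>w. form_rot \<Phi> w $ i $ j) z) = 0"
proof -
  have r: "rc z \<noteq> 0" by (rule rc_nonzero[OF z])
  define N where "N = cdot (h0 z) (vcnj (h0 z))"
  have cN: "cnj N = N" unfolding N_def by (rule cnj_cdot_h0_vcnj_h0)
  define P where "P = p z"
  define Y where "Y = (N / (rc z)\<^sup>2) * cnj (P $ i) * P $ j + (1 / (2 * rc z)) * h0 z $ i * cnj (h0 z $ j)"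
  have qP: "q z = vcnj P" unfolding P_def by (rule q_eq_vcnj_p[OF z])
  have "dzbs (\<lambda>w. form_rot \<Phi> w $ i $ j) z =
     (complex_of_real (\<Phi> z $ i) * dzb om z $ j - complex_of_real (\<Phi> z $ j) * dzb om z $ i) + (Y - cnj Y)"
    unfolding dzbs_form_rot_eq[OF z] om_eq_h0[OF z] dzb_q_eq[OF z] N_def[symmetric] P_def[symmetric] qP Y_def
    using r cN by (simp add: field_simps power2_eq_square)
  then show ?thesis using Re_dzb_om_nth[OF z W] by simp
qed

lemma dzb_real_norm2: "w \<in> U \<Longrightarrow> dzb_real (\<lambda>w. (norm (\<Phi> w))\<^sup>2) w = 2 * cdot (F w) (q w)"
proof -
  assume w: "w \<in> U"
  have d: "(\<lambda>w. (norm (\<Phi> w))\<^sup>2) differentiable (at w)" by (rule smooth_on_differentiable_at[OF U smooth_norm2 w])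
  have a: "pd1 (\<lambda>w. complex_of_real ((norm (\<Phi> w))\<^sup>2)) w = complex_of_real (pd1 (\<lambda>w. (norm (\<Phi> w))\<^sup>2) w)"
    "pd2 (\<lambda>w. complex_of_real ((norm (\<Phi> w))\<^sup>2)) w = complex_of_real (pd2 (\<lambda>w. (norm (\<Phi> w))\<^sup>2) w)"
    using pd_lin[OF bounded_linear_of_real d] by blast+
  have "dzb_real (\<lambda>w. (norm (\<Phi> w))\<^sup>2) w = dzbs (\<lambda>w. complex_of_real ((norm (\<Phi> w))\<^sup>2)) w"
    unfolding dzb_real_def dzbs_def a ..
  also have "(\<lambda>w. complex_of_real ((norm (\<Phi> w))\<^sup>2)) = FF"
    by (simp add: fun_eq_iff cdot_cvec power2_norm_eq_inner)
  also have "dzbs FF w = cdot (q w) (F w) + cdot (F w) (q w)"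
    unfolding dzbs_cdot[OF differentiable_F[OF w] differentiable_F[OF w]] dzb_F ..
  finally show ?thesis by (simp add: cdot_commute[of "q w"])
qed

lemma form_inv_eq:
  assumes w: "w \<in> U"
  shows "form_inv \<Phi> w = (FF w *s om w - (2 * cdot (F w) (om w)) *s F w)
    - inverse (rc w) *s ((2 * cdot (F w) (q w)) *s h0 w - (2 * cdot (F w) (h0 w)) *s q w)"
proof -
  have "complex_of_real (1 / \<rho> w) = inverse (rc w)" by (simp add: divide_inverse)
  moreover have "complex_of_real ((norm (\<Phi> w))\<^sup>2) = FF w" by (simp add: cdot_cvec power2_norm_eq_inner)
  ultimately show ?thesis unfolding form_inv_def invI_def dzb_real_norm2[OF w] by simp
qed

lemma dzbs_cdot_F:
  assumes z: "z \<in> U" and G: "G differentiable (at z)"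
  shows "dzbs (\<lambda>w. 2 * cdot (F w) (G w)) z = 2 * (cdot (q z) (G z) + cdot (F z) (dzb G z))"
  unfolding dzbs_cmult[OF bounded_bilinear_differentiable_at[OF bounded_bilinear_cdot differentiable_F[OF z] G]]
    dzbs_cdot[OF differentiable_F[OF z] G] dzb_F ..

lemma dzb_form_inv_eq:
  assumes z: "z \<in> U"
  shows "dzb (form_inv \<Phi>) z =
      ((2 * cdot (F z) (q z)) *s om z + FF z *s dzb om z
        - ((2 * (cdot (q z) (om z) + cdot (F z) (dzb om z))) *s F z + (2 * cdot (F z) (om z)) *s q z))
    - ((- dzbs rc z / (rc z)\<^sup>2) *s ((2 * cdot (F z) (q z)) *s h0 z - (2 * cdot (F z) (h0 z)) *s q z)
       + inverse (rc z) *s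
          (((2 * (cdot (q z) (q z) + cdot (F z) (dzb q z))) *s h0 z + (2 * cdot (F z) (q z)) *s dzb h0 z)
           - ((2 * (cdot (q z) (h0 z) + cdot (F z) (dzb h0 z))) *s q z + (2 * cdot (F z) (h0 z)) *s dzb q z)))"
proof -
  define c1 where "c1 w = 2 * cdot (F w) (om w)" for w
  define c2 where "c2 w = 2 * cdot (F w) (q w)" for w
  define c3 where "c3 w = 2 * cdot (F w) (h0 w)" for w
  define Psi where "Psi w = (FF w *s om w - c1 w *s F w) - inverse (rc w) *s (c2 w *s h0 w - c3 w *s q w)" for w
  have dd: "\<And>f. smooth_on U f \<Longrightarrow> f differentiable (at z)" using smooth_on_differentiable_at[OF U _ z] .
  have dom: "om differentiable (at z)" by (rule dd[OF smooth_om])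
  have dinv: "(\<lambda>w. inverse (rc w)) differentiable (at z)" by (rule dd[OF smooth_inverse_rc])
  have dn: "FF differentiable (at z)" by (rule dd[OF smooth_on_cdot[OF U smooth_F smooth_F]])
  have dc1: "c1 differentiable (at z)" unfolding c1_def[abs_def]
    by (rule dd, intro smooth_on_mult smooth_on_const smooth_on_cdot smooth_F smooth_om U)
  have dc2: "c2 differentiable (at z)" unfolding c2_def[abs_def]
    by (rule dd, intro smooth_on_mult smooth_on_const smooth_on_cdot smooth_F smooth_q U)
  have dc3: "c3 differentiable (at z)" unfolding c3_def[abs_def]
    by (rule dd, intro smooth_on_mult smooth_on_const smooth_on_cdot smooth_F smooth_h0 U)
  have en: "dzbs FF z = 2 * cdot (F z) (q z)"
    unfolding dzbs_cdot[OF differentiable_F[OF z] differentiable_F[OF z]] dzb_F by (simp add: cdot_commute[of "q z"])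
  have sd: "(\<lambda>w. a w *s G w) differentiable (at z)"
    if "a differentiable (at z)" "G differentiable (at z)" for a :: "complex \<Rightarrow> complex" and G :: "complex \<Rightarrow> complex^'n"
    by (rule bounded_bilinear_differentiable_at[OF bounded_bilinear_vec_smult that])
  have dA: "(\<lambda>w. FF w *s om w - c1 w *s F w) differentiable (at z)"
    by (intro differentiable_diff sd dn dom dc1 differentiable_F[OF z])
  have dB: "(\<lambda>w. c2 w *s h0 w - c3 w *s q w) differentiable (at z)"
    by (intro differentiable_diff sd dc2 dc3 differentiable_h0[OF z] differentiable_q[OF z])
  have "dzb (form_inv \<Phi>) z = dzb Psi z" by (rule dzb_cong[OF U z]) (simp add: form_inv_eq Psi_def c1_def c2_def c3_def)
  also have "\<dots> = (dzbs FF z *s om z + FF z *s dzb om z - (dzbs c1 z *s F z + c1 z *s q z))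
      - (dzbs (\<lambda>w. inverse (rc w)) z *s (c2 z *s h0 z - c3 z *s q z)
         + inverse (rc z) *s ((dzbs c2 z *s h0 z + c2 z *s dzb h0 z) - (dzbs c3 z *s q z + c3 z *s dzb q z)))"
    unfolding Psi_def dzb_diff[OF dA sd[OF dinv dB]] dzb_smult[OF dinv dB]
      dzb_diff[OF sd[OF dn dom] sd[OF dc1 differentiable_F[OF z]]]
      dzb_diff[OF sd[OF dc2 differentiable_h0[OF z]] sd[OF dc3 differentiable_q[OF z]]]
      dzb_smult[OF dn dom] dzb_smult[OF dc1 differentiable_F[OF z]] dzb_smult[OF dc2 differentiable_h0[OF z]]
      dzb_smult[OF dc3 differentiable_q[OF z]] dzb_F ..
  finally show ?thesis
    unfolding en c1_def[abs_def] c2_def[abs_def] c3_def[abs_def] dzbs_cdot_F[OF z dom]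
      dzbs_cdot_F[OF z differentiable_q[OF z]] dzbs_cdot_F[OF z differentiable_h0[OF z]]
      dzbs_inverse[OF differentiable_rc[OF z] rc_nonzero[OF z]] .
qed

lemma vRe_dzb_form_inv:
  assumes z: "z \<in> U" and W: "willmore_on U \<Phi>"
  shows "vRe (dzb (form_inv \<Phi>) z) = 0"
proof (rule vec_eq_iff[THEN iffD2], rule allI)
  fix k
  have r: "rc z \<noteq> 0" by (rule rc_nonzero[OF z])
  define X where "X = dzb om z"
  define N where "N = cdot (h0 z) (vcnj (h0 z))"
  have cN: "cnj N = N" unfolding N_def by (rule cnj_cdot_h0_vcnj_h0)
  define P where "P = p z"
  define Y where "Y = (2 * N / (rc z)\<^sup>2) * cdot (F z) (q z) * P $ k + (1 / rc z) * cdot (F z) (h0 z) * cnj (h0 z $ k)"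
  have qP: "q z = vcnj P" unfolding P_def by (rule q_eq_vcnj_p[OF z])
  have cF: "cnj (cdot (F z) v) = cdot (F z) (vcnj v)" for v by (rule cnj_cdot_cvec)
  have Z: "dzb (form_inv \<Phi>) z $ k = FF z * X $ k - 2 * cdot (F z) X * F z $ k + (Y - cnj Y)"
    unfolding dzb_form_inv_eq[OF z] cdot_q_om[OF z] cdot_qq[OF z] cdot_commute[of "q z" "h0 z"] cdot_h0_q[OF z]
    unfolding om_eq_h0[OF z] dzb_q_eq[OF z] X_def[symmetric] N_def[symmetric] P_def[symmetric]
    unfolding Y_def cF
    using r cN by (simp add: qP cnj_cdot_cvec cdot_simps field_simps power2_eq_square)
  have "FF z = complex_of_real (\<Phi> z \<bullet> \<Phi> z)" by (simp add: cdot_cvec)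
  moreover have "Re (cdot (F z) X) = 0" unfolding X_def by (rule Re_cdot_F_dzb_om[OF z W])
  ultimately show "vRe (dzb (form_inv \<Phi>) z) $ k = 0 $ k"
    unfolding vRe_nth Z X_def using Re_dzb_om_nth[OF z W, of k] by simp
qed

end

theorem mainTheorem2:
  fixes U :: "complex set" and \<Phi> :: "complex \<Rightarrow> real^'n"
  assumes "CARD('n) \<ge> 3"
    and "open U"
    and "smooth_on U \<Phi>"
    and "conformal_immersion_on U \<Phi>"
    and "willmore_on U \<Phi>"
  shows "closed_form_on U (\<lambda>z. vIm (form_transl \<Phi> z)) (\<lambda>z. vRe (form_transl \<Phi> z))
       \<and> closed_form_on U (\<lambda>z. mIm (form_rot \<Phi> z)) (\<lambda>z. mRe (form_rot \<Phi> z))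
       \<and> closed_form_on U (\<lambda>z. Im (form_dil \<Phi> z)) (\<lambda>z. Re (form_dil \<Phi> z))
       \<and> closed_form_on U (\<lambda>z. vIm (form_inv \<Phi> z)) (\<lambda>z. vRe (form_inv \<Phi> z))"
proof -
  interpret conformal_chart U \<Phi> by unfold_locales (rule assms)+
  have W: "willmore_on U \<Phi>" by (rule assms(5))
  note diff = smooth_on_differentiable_at[OF U]
  have "form_transl \<Phi> = om" by (simp add: fun_eq_iff form_transl_def)
  then have t: "closed_form_on U (\<lambda>z. vIm (form_transl \<Phi> z)) (\<lambda>z. vRe (form_transl \<Phi> z))"
    using closed_form_on_vIm_vRe[of U om] diff[OF smooth_om] vRe_dzb_om[OF _ W] by simp
  have r: "closed_form_on U (\<lambda>z. mIm (form_rot \<Phi> z)) (\<lambda>z. mRe (form_rot \<Phi> z))"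
    by (intro closed_form_on_mIm_mRe diff[OF smooth_form_rot] Re_dzbs_form_rot[OF _ W])
  have d: "closed_form_on U (\<lambda>z. Im (form_dil \<Phi> z)) (\<lambda>z. Re (form_dil \<Phi> z))"
    by (intro closed_form_on_Im_Re diff[OF smooth_form_dil] Re_dzbs_form_dil[OF _ W])
  have i: "closed_form_on U (\<lambda>z. vIm (form_inv \<Phi> z)) (\<lambda>z. vRe (form_inv \<Phi> z))"
    by (intro closed_form_on_vIm_vRe diff[OF smooth_form_inv] vRe_dzb_form_inv[OF _ W])
  show ?thesis using t r d i by blast
qed

end
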